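(* There is no triharmonic Legendre curve in a $3$-dimensional $f$-Kenmotsu manifold $(M,\varphi,\xi,\eta,g)$.
   Context: An almost contact metric manifold $(M^{2n+1},\varphi,\xi,\eta,g)$ has $\varphi^2=-I+\eta\otimes\xi$, $\eta(\xi)=1$, $\varphi\xi=0$, $\eta\circ\varphi=0$, $\eta(X)=g(X,\xi)$, $g(\varphi X,\varphi Y)=g(X,Y)-\eta(X)\eta(Y)$. It is $f$-Kenmotsu if $(\nabla_X\varphi)Y=f(g(\varphi X,Y)\xi-\eta(Y)\varphi X)$ and $\nabla_X\xi=f(X-\eta(X)\xi)$ for smooth $f$ with $df\wedge\eta=0$. In dimension 3 the curvature is $R(X,Y)Z=(\frac r2+2(f^2+f'))(g(Y,Z)X-g(X,Z)Y)-(\frac r2+3(f^2+f'))(g(Y,Z)\eta(X)\xi-g(X,Z)\eta(Y)\xi-\eta(X)\eta(Z)Y+\eta(Y)\eta(Z)X)$, with $r$ the scalar curvature and $f'$ the derivative of $f$. For an arc-length parametrized Frenet curve $\gamma$ with $T=\gamma'$, $\nabla_TT=k_1N$, $\nabla_TN=-k_1T+k_2B$, $\nabla_TB=-k_2N$. A Legendre curve is a slant curve with contact angle $\theta=\pi/2$ (or $3\pi/2$), i.e. $g(T,\xi)=\eta(T)=0$ along the curve. A curve is triharmonic if $\tau_3(\gamma)=\nabla_T^5T+R(\nabla_T^3T,T)T-R(\nabla_T^2T,\nabla_TT)T=0$. *)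

theory Defs
  imports "HOL-Analysis.Analysis"
begin

text \<open>Local (coordinate) model: a 3-dimensional Riemannian manifold is an open set
U of real^3 with a smooth metric g (g p x y = metric at p applied to tangent vectors x y).
Since every curve segment lies in a chart and any open U with such g is a manifold,
non-existence of triharmonic Legendre curves is equivalently stated in this setting.\<close>

type_synonym pt = "real^3"

coinductive C_inf_on :: "'a::real_normed_vector set \<Rightarrow> ('a \<Rightarrow> real) \<Rightarrow> bool"
  for U where
  "\<lbrakk>\<forall>x\<in>U. h differentiable (at x);
    \<forall>v. C_inf_on U (\<lambda>x. frechet_derivative h (at x) v)\<rbrakk> \<Longrightarrow> C_inf_on U h"

definition vf_smooth :: "'a::real_normed_vector set \<Rightarrow> ('a \<Rightarrow> pt) \<Rightarrow> bool" where
  "vf_smooth U X \<longleftrightarrow> (\<forall>i. C_inf_on U (\<lambda>p. X p $ i))"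

definition riemannian_metric :: "pt set \<Rightarrow> (pt \<Rightarrow> pt \<Rightarrow> pt \<Rightarrow> real) \<Rightarrow> bool" where
  "riemannian_metric U g \<longleftrightarrow> open U \<and>
     (\<forall>p\<in>U. (\<forall>x y z a b. g p (a *\<^sub>R x + b *\<^sub>R y) z = a * g p x z + b * g p y z)
          \<and> (\<forall>x y. g p x y = g p y x) \<and> (\<forall>x. x \<noteq> 0 \<longrightarrow> g p x x > 0)) \<and>
     (\<forall>x y. C_inf_on U (\<lambda>p. g p x y))"

definition dg :: "(pt \<Rightarrow> pt \<Rightarrow> pt \<Rightarrow> real) \<Rightarrow> pt \<Rightarrow> pt \<Rightarrow> pt \<Rightarrow> pt \<Rightarrow> real" where
  "dg g p x y z = frechet_derivative (\<lambda>q. g q y z) (at p) x"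

text \<open>Christoffel term of the Levi-Civita connection (Koszul formula for constant fields).\<close>
definition christoffel :: "(pt \<Rightarrow> pt \<Rightarrow> pt \<Rightarrow> real) \<Rightarrow> pt \<Rightarrow> pt \<Rightarrow> pt \<Rightarrow> pt" where
  "christoffel g p x y =
     (THE w. \<forall>z. g p w z = (dg g p x y z + dg g p y x z - dg g p z x y) / 2)"

definition cov_deriv :: "(pt \<Rightarrow> pt \<Rightarrow> pt \<Rightarrow> real) \<Rightarrow> (pt \<Rightarrow> pt) \<Rightarrow> pt \<Rightarrow> pt \<Rightarrow> pt" where
  "cov_deriv g Y p x = frechet_derivative Y (at p) x + christoffel g p x (Y p)"

text \<open>Riemann curvature R(x,y)z = nabla_x nabla_y z - nabla_y nabla_x z - nabla_[x,y] z,
 computed with constant coordinate extensions (whose bracket vanishes).\<close>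
definition curvature :: "(pt \<Rightarrow> pt \<Rightarrow> pt \<Rightarrow> real) \<Rightarrow> pt \<Rightarrow> pt \<Rightarrow> pt \<Rightarrow> pt \<Rightarrow> pt" where
  "curvature g p x y z =
     cov_deriv g (\<lambda>q. christoffel g q y z) p x - cov_deriv g (\<lambda>q. christoffel g q x z) p y"

definition f_kenmotsu ::
  "pt set \<Rightarrow> (pt \<Rightarrow> pt \<Rightarrow> pt \<Rightarrow> real) \<Rightarrow> (pt \<Rightarrow> pt \<Rightarrow> pt) \<Rightarrow> (pt \<Rightarrow> pt)
     \<Rightarrow> (pt \<Rightarrow> pt \<Rightarrow> real) \<Rightarrow> (pt \<Rightarrow> real) \<Rightarrow> bool" where
  "f_kenmotsu U g \<phi> \<xi> \<eta> f \<longleftrightarrow>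
     riemannian_metric U g \<and> vf_smooth U \<xi> \<and> (\<forall>Y. vf_smooth U (\<lambda>p. \<phi> p Y)) \<and> C_inf_on U f \<and>
     (\<forall>p\<in>U.
        linear (\<phi> p) \<and>
        (\<forall>X. \<eta> p X = g p X (\<xi> p)) \<and>
        (\<forall>X. \<phi> p (\<phi> p X) = - X + \<eta> p X *\<^sub>R \<xi> p) \<and>
        \<eta> p (\<xi> p) = 1 \<and> \<phi> p (\<xi> p) = 0 \<and>
        (\<forall>X. \<eta> p (\<phi> p X) = 0) \<and>
        (\<forall>X Y. g p (\<phi> p X) (\<phi> p Y) = g p X Y - \<eta> p X * \<eta> p Y) \<and>
        (\<forall>X Y. cov_deriv g (\<lambda>q. \<phi> q Y) p X - \<phi> p (christoffel g p X Y)
               = f p *\<^sub>R (g p (\<phi> p X) Y *\<^sub>R \<xi> p - \<eta> p Y *\<^sub>R \<phi> p X)) \<and>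
        (\<forall>X. cov_deriv g \<xi> p X = f p *\<^sub>R (X - \<eta> p X *\<^sub>R \<xi> p)) \<and>
        (\<forall>X Y. frechet_derivative f (at p) X * \<eta> p Y - frechet_derivative f (at p) Y * \<eta> p X = 0))"

definition velocity :: "(real \<Rightarrow> pt) \<Rightarrow> real \<Rightarrow> pt" where
  "velocity \<gamma> s = vector_derivative \<gamma> (at s)"

definition covD :: "(pt \<Rightarrow> pt \<Rightarrow> pt \<Rightarrow> real) \<Rightarrow> (real \<Rightarrow> pt) \<Rightarrow> (real \<Rightarrow> pt) \<Rightarrow> real \<Rightarrow> pt" where
  "covD g \<gamma> V = (\<lambda>s. vector_derivative V (at s) + christoffel g (\<gamma> s) (velocity \<gamma> s) (V s))"

definition frenet_curve :: "pt set \<Rightarrow> (pt \<Rightarrow> pt \<Rightarrow> pt \<Rightarrow> real) \<Rightarrow> real set \<Rightarrow> (real \<Rightarrow> pt) \<Rightarrow> bool" where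
  "frenet_curve U g I \<gamma> \<longleftrightarrow>
     open I \<and> is_interval I \<and> I \<noteq> {} \<and> (\<forall>s\<in>I. \<gamma> s \<in> U) \<and> vf_smooth I \<gamma> \<and>
     (let T = velocity \<gamma> in
       (\<forall>s\<in>I. g (\<gamma> s) (T s) (T s) = 1) \<and>
       (\<exists>N B k1 k2. vf_smooth I N \<and> vf_smooth I B \<and>
          (\<forall>s\<in>I. g (\<gamma> s) (N s) (N s) = 1 \<and> g (\<gamma> s) (B s) (B s) = 1 \<and>
                 g (\<gamma> s) (T s) (N s) = 0 \<and> g (\<gamma> s) (T s) (B s) = 0 \<and> g (\<gamma> s) (N s) (B s) = 0 \<and>
                 k1 s > 0 \<and> k2 s > 0 \<and>
                 covD g \<gamma> T s = k1 s *\<^sub>R N s \<and>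
                 covD g \<gamma> N s = - k1 s *\<^sub>R T s + k2 s *\<^sub>R B s \<and>
                 covD g \<gamma> B s = - k2 s *\<^sub>R N s)))"

definition legendre_curve :: "(pt \<Rightarrow> pt \<Rightarrow> real) \<Rightarrow> real set \<Rightarrow> (real \<Rightarrow> pt) \<Rightarrow> bool" where
  "legendre_curve \<eta> I \<gamma> \<longleftrightarrow> (\<forall>s\<in>I. \<eta> (\<gamma> s) (velocity \<gamma> s) = 0)"

definition tau3 :: "(pt \<Rightarrow> pt \<Rightarrow> pt \<Rightarrow> real) \<Rightarrow> (real \<Rightarrow> pt) \<Rightarrow> real \<Rightarrow> pt" where
  "tau3 g \<gamma> s = (let T = velocity \<gamma>; D = covD g \<gamma> in
     (D ^^ 5) T s + curvature g (\<gamma> s) ((D ^^ 3) T s) (T s) (T s)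
                  - curvature g (\<gamma> s) ((D ^^ 2) T s) (D T s) (T s))"

definition triharmonic :: "(pt \<Rightarrow> pt \<Rightarrow> pt \<Rightarrow> real) \<Rightarrow> real set \<Rightarrow> (real \<Rightarrow> pt) \<Rightarrow> bool" where
  "triharmonic g I \<gamma> \<longleftrightarrow> (\<forall>s\<in>I. tau3 g \<gamma> s = 0)"

end

theory Submission
  imports Defs
begin

text \<open>Along a Legendre curve \<gamma> the Reeb field \<open>X = \<xi> \<circ> \<gamma>\<close> is a unit normal field with
  \<open>\<nabla>\<^sub>T X = f T\<close>, and \<open>f\<close> and \<open>\<xi>(f)\<close> are constant along \<gamma> because their differentials are
  multiples of \<eta>. Rotating the normal part of the Frenet frame gives an orthonormal frame
  \<open>T, E, X\<close> with \<open>\<nabla>T = \<kappa> E - c X\<close>, \<open>\<nabla>E = - \<kappa> T\<close>, \<open>\<nabla>X = c T\<close>, where \<open>c = f \<circ> \<gamma>\<close> is a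
  nonzero constant and \<open>\<kappa>'\<close> vanishes nowhere. In this frame \<open>\<nabla>\<^sup>5T\<close> is a polynomial in \<open>c\<close> and
  the derivatives of \<kappa>, and the curvature terms of \<open>\<tau>\<^sub>3\<close> only involve \<open>R(x,y)\<xi>\<close>, which is
  determined by \<open>\<nabla>\<xi> = f (I - \<eta> \<otimes> \<xi>)\<close> alone. The \<open>T\<close>- and
  \<open>\<xi>\<close>-components of \<open>\<tau>\<^sub>3 = 0\<close> are two ODEs for \<kappa>; eliminating the higher derivatives leaves
  \<open>\<kappa> (a + 21 \<kappa>\<^sup>2) = 0\<close> with a constant \<open>a\<close>, which is incompatible with \<open>\<kappa>' \<noteq> 0\<close>.\<close>

section \<open>Smooth functions\<close>

lemma has_derivative_vec_nth_iff:
  fixes f :: "'a::real_normed_vector \<Rightarrow> real^'n"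
  shows "(f has_derivative f') (at a within S) \<longleftrightarrow>
    (\<forall>i. ((\<lambda>x. f x $ i) has_derivative (\<lambda>h. f' h $ i)) (at a within S))"
  by (subst has_derivative_componentwise_within)
    (auto simp: Basis_vec_def cart_eq_inner_axis[symmetric] inner_axis)

lemma linear_axis_expansion:
  fixes L :: "real^'n \<Rightarrow> real"
  assumes "linear L"
  shows "L w = (\<Sum>i\<in>UNIV. w$i * L (axis i 1))"
proof -
  have "L w = L (\<Sum>i\<in>UNIV. w$i *\<^sub>R axis i 1)"
    using basis_expansion[of w] by (simp add: scalar_mult_eq_scaleR)
  also have "\<dots> = (\<Sum>i\<in>UNIV. w$i * L (axis i 1))"
    using assms by (simp add: linear_sum linear_scale)
  finally show ?thesis .
qed

lemma C_inf_on_has_derivative: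
  "C_inf_on S h \<Longrightarrow> x \<in> S \<Longrightarrow> (h has_derivative frechet_derivative h (at x)) (at x)"
  by (metis C_inf_on.cases frechet_derivative_works)

lemma C_inf_on_frechet_derivative:
  "C_inf_on S h \<Longrightarrow> C_inf_on S (\<lambda>x. frechet_derivative h (at x) v)"
  by (metis C_inf_on.cases)

text \<open>Membership only depends on the values on \<open>S\<close>, because derivatives are only identified
  pointwise on \<open>S\<close>. If the derivatives of the generators lie in the algebra, so do those of all
  its members, and coinduction shows that all members are \<open>C_inf_on S\<close>.\<close>
inductive generated_algebra :: "('a::real_normed_vector \<Rightarrow> real) set \<Rightarrow> 'a set \<Rightarrow> ('a \<Rightarrow> real) \<Rightarrow> bool"
  for G S where
  generator: "h \<in> G \<Longrightarrow> generated_algebra G S h"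
| const: "generated_algebra G S (\<lambda>x. c)"
| add: "generated_algebra G S u \<Longrightarrow> generated_algebra G S v \<Longrightarrow> generated_algebra G S (\<lambda>x. u x + v x)"
| mult: "generated_algebra G S u \<Longrightarrow> generated_algebra G S v \<Longrightarrow> generated_algebra G S (\<lambda>x. u x * v x)"
| inverse: "generated_algebra G S u \<Longrightarrow> \<forall>x\<in>S. u x \<noteq> 0 \<Longrightarrow> generated_algebra G S (\<lambda>x. inverse (u x))"
| cong: "generated_algebra G S u \<Longrightarrow> \<forall>x\<in>S. v x = u x \<Longrightarrow> generated_algebra G S v"

lemma generated_algebra_sum:
  "finite A \<Longrightarrow> (\<And>i. i \<in> A \<Longrightarrow> generated_algebra G S (F i)) \<Longrightarrow>
    generated_algebra G S (\<lambda>x. \<Sum>i\<in>A. F i x)"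
  by (induction A rule: finite_induct) (auto intro: generated_algebra.const generated_algebra.add)

lemma generated_algebra_derivativeI:
  assumes "\<And>x. x \<in> S \<Longrightarrow> (u has_derivative D x) (at x)"
    and "\<And>v. generated_algebra G S (\<lambda>x. D x v)"
  shows "(\<forall>x\<in>S. (u has_derivative frechet_derivative u (at x)) (at x)) \<and>
         (\<forall>v. generated_algebra G S (\<lambda>x. frechet_derivative u (at x) v))"
proof -
  have D: "frechet_derivative u (at x) = D x" if "x \<in> S" for x
    using frechet_derivative_at[OF assms(1)[OF that]] by simp
  show ?thesis
    using assms D by (auto intro: generated_algebra.cong[OF assms(2)])
qed

lemma generated_algebra_derivative:
  assumes S: "open S"
    and G_deriv: "\<And>h x. h \<in> G \<Longrightarrow> x \<in> S \<Longrightarrow> (h has_derivative frechet_derivative h (at x)) (at x)"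
    and G_closed: "\<And>h v. h \<in> G \<Longrightarrow> generated_algebra G S (\<lambda>x. frechet_derivative h (at x) v)"
    and "generated_algebra G S u"
  shows "(\<forall>x\<in>S. (u has_derivative frechet_derivative u (at x)) (at x)) \<and>
         (\<forall>v. generated_algebra G S (\<lambda>x. frechet_derivative u (at x) v))"
  using assms(4)
proof (induction rule: generated_algebra.induct)
  case (generator h)
  then show ?case using G_deriv G_closed by blast
next
  case (const c)
  show ?case
    by (rule generated_algebra_derivativeI[where D = "\<lambda>x h. 0"])
      (auto intro: has_derivative_const generated_algebra.const)
next
  case (add u v)
  then show ?case
    by (intro generated_algebra_derivativeI[where
          D = "\<lambda>x h. frechet_derivative u (at x) h + frechet_derivative v (at x) h"])
      (auto intro: has_derivative_add generated_algebra.add)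
next
  case (mult u v)
  let ?D = "\<lambda>x h. u x * frechet_derivative v (at x) h + frechet_derivative u (at x) h * v x"
  have "generated_algebra G S (\<lambda>x. ?D x h)" for h
    using mult by (intro generated_algebra.add generated_algebra.mult) auto
  with mult show ?case
    by (intro generated_algebra_derivativeI[where D = ?D]) (auto intro: has_derivative_mult)
next
  case (inverse u)
  let ?D = "\<lambda>x h. - (inverse (u x) * frechet_derivative u (at x) h * inverse (u x))"
  have "generated_algebra G S (\<lambda>x. ?D x h)" for h
  proof -
    have "generated_algebra G S (\<lambda>x. -1
      * (inverse (u x) * frechet_derivative u (at x) h * inverse (u x)))"
      using inverse by
        (intro generated_algebra.mult generated_algebra.const generated_algebra.inverse) auto
    then show ?thesis by (rule generated_algebra.cong) simp
  qed
  with inverse show ?case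
    by (intro generated_algebra_derivativeI[where D = ?D]) (auto intro: has_derivative_inverse)
next
  case (cong u v)
  have "(v has_derivative frechet_derivative u (at x)) (at x)" if x: "x \<in> S" for x
  proof (rule has_derivative_transform_within_open[OF _ S x])
    show "(u has_derivative frechet_derivative u (at x)) (at x)"
      using cong.IH x by blast
    show "u y = v y" if "y \<in> S" for y
      using cong.hyps(2) that by simp
  qed
  with cong.IH show ?case
    by (intro generated_algebra_derivativeI[where D = "\<lambda>x. frechet_derivative u (at x)"]) auto
qed

lemma generated_algebra_C_inf_on:
  assumes "open S"
    and "\<And>h x. h \<in> G \<Longrightarrow> x \<in> S \<Longrightarrow> (h has_derivative frechet_derivative h (at x)) (at x)"
    and "\<And>h v. h \<in> G \<Longrightarrow> generated_algebra G S (\<lambda>x. frechet_derivative h (at x) v)"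
    and "generated_algebra G S u"
  shows "C_inf_on S u"
  using assms(4)
proof (coinduction arbitrary: u rule: C_inf_on.coinduct)
  case (C_inf_on u)
  then show ?case
    using generated_algebra_derivative[OF assms(1-3) C_inf_on] by (auto intro: differentiableI)
qed

lemma frechet_derivative_compose_axis:
  fixes \<gamma> :: "'a::real_normed_vector \<Rightarrow> pt"
  assumes h: "C_inf_on U h" and \<gamma>U: "\<gamma> x \<in> U" and \<gamma>: "vf_smooth S \<gamma>" and x: "x \<in> S"
  shows "((\<lambda>x. h (\<gamma> x)) has_derivative frechet_derivative (\<lambda>x. h (\<gamma> x)) (at x)) (at x)"
    and "frechet_derivative (\<lambda>x. h (\<gamma> x)) (at x) v =
      (\<Sum>i\<in>UNIV. frechet_derivative (\<lambda>x. \<gamma> x $ i) (at x) v * frechet_derivative h (at (\<gamma> x)) (axis i 1))"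
proof -
  define D\<gamma> where "D\<gamma> v = (\<chi> i. frechet_derivative (\<lambda>x. \<gamma> x $ i) (at x) v)" for v
  have "(\<gamma> has_derivative D\<gamma>) (at x)"
    unfolding has_derivative_vec_nth_iff D\<gamma>_def
    using \<gamma> x C_inf_on_has_derivative unfolding vf_smooth_def by fastforce
  moreover have dh: "(h has_derivative frechet_derivative h (at (\<gamma> x))) (at (\<gamma> x))"
    using C_inf_on_has_derivative[OF h \<gamma>U] .
  ultimately have chain: "((\<lambda>x. h (\<gamma> x)) has_derivative
      (\<lambda>v. frechet_derivative h (at (\<gamma> x)) (D\<gamma> v))) (at x)"
    using diff_chain_at by (simp add: o_def)
  then show "((\<lambda>x. h (\<gamma> x)) has_derivative frechet_derivative (\<lambda>x. h (\<gamma> x)) (at x)) (at x)"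
    using frechet_derivative_at by metis
  have "linear (frechet_derivative h (at (\<gamma> x)))"
    using dh has_derivative_linear by blast
  from linear_axis_expansion[OF this, of "D\<gamma> v"]
  show "frechet_derivative (\<lambda>x. h (\<gamma> x)) (at x) v =
      (\<Sum>i\<in>UNIV. frechet_derivative (\<lambda>x. \<gamma> x $ i) (at x) v * frechet_derivative h (at (\<gamma> x)) (axis i 1))"
    unfolding frechet_derivative_at[OF chain, symmetric] by (simp add: D\<gamma>_def)
qed

context
  fixes S :: "'a::real_normed_vector set"
  assumes S: "open S"
begin

lemma C_inf_on_generated_algebra:
  "generated_algebra {h. C_inf_on S h} S u \<Longrightarrow> C_inf_on S u"
  by (rule generated_algebra_C_inf_on[OF S])
    (auto intro: C_inf_on_has_derivative generated_algebra.generator C_inf_on_frechet_derivative)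

lemma C_inf_on_const: "C_inf_on S (\<lambda>x. c)"
  by (rule C_inf_on_generated_algebra) (rule generated_algebra.const)

lemma C_inf_on_add: "C_inf_on S u \<Longrightarrow> C_inf_on S v \<Longrightarrow> C_inf_on S (\<lambda>x. u x + v x)"
  by (rule C_inf_on_generated_algebra)
    (auto intro: generated_algebra.add generated_algebra.generator)

lemma C_inf_on_mult: "C_inf_on S u \<Longrightarrow> C_inf_on S v \<Longrightarrow> C_inf_on S (\<lambda>x. u x * v x)"
  by (rule C_inf_on_generated_algebra)
    (auto intro: generated_algebra.mult generated_algebra.generator)

lemma C_inf_on_inverse:
  "C_inf_on S u \<Longrightarrow> \<forall>x\<in>S. u x \<noteq> 0 \<Longrightarrow> C_inf_on S (\<lambda>x. inverse (u x))"
  by (rule C_inf_on_generated_algebra)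
    (auto intro: generated_algebra.inverse generated_algebra.generator)

lemma C_inf_on_cong: "C_inf_on S u \<Longrightarrow> \<forall>x\<in>S. v x = u x \<Longrightarrow> C_inf_on S v"
  by (rule C_inf_on_generated_algebra, rule generated_algebra.cong[OF generated_algebra.generator])
    auto

lemma C_inf_on_minus: "C_inf_on S u \<Longrightarrow> C_inf_on S (\<lambda>x. - u x)"
  using C_inf_on_mult[OF C_inf_on_const[of "-1"]] by simp

lemma C_inf_on_diff: "C_inf_on S u \<Longrightarrow> C_inf_on S v \<Longrightarrow> C_inf_on S (\<lambda>x. u x - v x)"
  using C_inf_on_add[OF _ C_inf_on_minus] by simp

lemma C_inf_on_divide:
  "C_inf_on S u \<Longrightarrow> C_inf_on S v \<Longrightarrow> \<forall>x\<in>S. v x \<noteq> 0 \<Longrightarrow> C_inf_on S (\<lambda>x. u x / v x)"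
  using C_inf_on_mult[OF _ C_inf_on_inverse] by (simp add: divide_inverse)

lemma C_inf_on_sum:
  "finite A \<Longrightarrow> (\<And>i. i \<in> A \<Longrightarrow> C_inf_on S (F i)) \<Longrightarrow> C_inf_on S (\<lambda>x. \<Sum>i\<in>A. F i x)"
  by (induction A rule: finite_induct) (auto intro: C_inf_on_const C_inf_on_add)

lemma C_inf_on_prod:
  "finite A \<Longrightarrow> (\<And>i. i \<in> A \<Longrightarrow> C_inf_on S (F i)) \<Longrightarrow> C_inf_on S (\<lambda>x. \<Prod>i\<in>A. F i x)"
  by (induction A rule: finite_induct) (auto intro: C_inf_on_const C_inf_on_mult)

lemma C_inf_on_det:
  fixes A :: "'a \<Rightarrow> real^'n^'n"
  assumes "\<And>i j. C_inf_on S (\<lambda>x. A x $ i $ j)"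
  shows "C_inf_on S (\<lambda>x. det (A x))"
  unfolding det_def using assms
  by (intro C_inf_on_sum C_inf_on_mult C_inf_on_prod C_inf_on_const) auto

lemma C_inf_on_compose:
  fixes \<gamma> :: "'a \<Rightarrow> pt"
  assumes h: "C_inf_on U h" and \<gamma>U: "\<forall>x\<in>S. \<gamma> x \<in> U" and \<gamma>: "vf_smooth S \<gamma>"
  shows "C_inf_on S (\<lambda>x. h (\<gamma> x))"
proof -
  let ?G = "{h. C_inf_on S h} \<union> {(\<lambda>x. h (\<gamma> x)) | h. C_inf_on U h}"
  have \<gamma>i: "C_inf_on S (\<lambda>x. \<gamma> x $ i)" for i
    using \<gamma> unfolding vf_smooth_def by blast
  note chain = frechet_derivative_compose_axis[OF _ _ \<gamma>]
  show ?thesis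
  proof (rule generated_algebra_C_inf_on[OF S])
    show "generated_algebra ?G S (\<lambda>x. h (\<gamma> x))"
      using h by (intro generated_algebra.generator) blast
  next
    fix k x assume "k \<in> ?G" "x \<in> S"
    then show "(k has_derivative frechet_derivative k (at x)) (at x)"
      using chain(1) \<gamma>U C_inf_on_has_derivative by blast
  next
    fix k v assume "k \<in> ?G"
    then consider "C_inf_on S k" | h where "C_inf_on U h" "k = (\<lambda>x. h (\<gamma> x))"
      by blast
    then show "generated_algebra ?G S (\<lambda>x. frechet_derivative k (at x) v)"
    proof cases
      case 1
      then show ?thesis by (intro generated_algebra.generator) (simp add: C_inf_on_frechet_derivative)
    next
      case 2
      have terms: "generated_algebra ?G S (\<lambda>x. frechet_derivative (\<lambda>x. \<gamma> x $ i) (at x) v *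
                                       frechet_derivative h (at (\<gamma> x)) (axis i 1))" for i
      proof (intro generated_algebra.mult generated_algebra.generator)
        show "(\<lambda>x. frechet_derivative (\<lambda>x. \<gamma> x $ i) (at x) v) \<in> ?G"
          using C_inf_on_frechet_derivative[OF \<gamma>i] by blast
        have "C_inf_on U (\<lambda>p. frechet_derivative h (at p) (axis i 1))"
          using C_inf_on_frechet_derivative[OF 2(1)] .
        then show "(\<lambda>x. frechet_derivative h (at (\<gamma> x)) (axis i 1)) \<in> ?G"
          by (intro UnI2 CollectI exI[of _ "\<lambda>p. frechet_derivative h (at p) (axis i 1)"]) simp
      qed
      have "generated_algebra ?G S (\<lambda>x. \<Sum>i\<in>UNIV. frechet_derivative (\<lambda>x. \<gamma> x $ i) (at x) v *
                                       frechet_derivative h (at (\<gamma> x)) (axis i 1))"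
        by (rule generated_algebra_sum) (simp_all add: terms)
      then show ?thesis
        by (rule generated_algebra.cong) (use 2 chain(2) \<gamma>U in simp)
    qed
  qed
qed

end

lemma vf_smooth_has_derivative:
  assumes "vf_smooth S V" "p \<in> S"
  shows "(V has_derivative frechet_derivative V (at p)) (at p)"
proof -
  have "((\<lambda>q. V q $ i) has_derivative frechet_derivative (\<lambda>q. V q $ i) (at p)) (at p)" for i
    using assms C_inf_on_has_derivative unfolding vf_smooth_def by blast
  then have "(V has_derivative (\<lambda>v. \<chi> i. frechet_derivative (\<lambda>q. V q $ i) (at p) v)) (at p)"
    unfolding has_derivative_vec_nth_iff by simp
  then show ?thesis
    using frechet_derivative_at by metis
qed

lemma has_derivative_unique_on_open:
  assumes "open S" "p \<in> S" "\<And>q. q \<in> S \<Longrightarrow> f q = f2 q"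
    and "(f has_derivative f') (at p)" "(f2 has_derivative f2') (at p)"
  shows "f' = f2'"
proof -
  have "(f2 has_derivative f') (at p)"
    using has_derivative_transform_within_open[OF assms(4,1,2)] assms(3) by auto
  then show ?thesis
    using has_derivative_unique assms(5) by blast
qed

section \<open>Symmetry of second derivatives\<close>

lemma mvt_along_line:
  fixes \<phi> :: "'a::real_normed_vector \<Rightarrow> real"
  assumes r: "0 < r"
    and d: "\<And>t. 0 \<le> t \<Longrightarrow> t \<le> r \<Longrightarrow> (\<phi> has_derivative D (a + t *\<^sub>R v)) (at (a + t *\<^sub>R v))"
  shows "\<exists>t. 0 < t \<and> t < r \<and> \<phi> (a + r *\<^sub>R v) - \<phi> a = r * D (a + t *\<^sub>R v) v"
proof -
  have "DERIV (\<lambda>t. \<phi> (a + t *\<^sub>R v)) t :> D (a + t *\<^sub>R v) v" if "0 \<le> t" "t \<le> r" for t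
  proof -
    have line: "((\<lambda>t. a + t *\<^sub>R v) has_derivative (\<lambda>h. h *\<^sub>R v)) (at t)"
      by (auto intro!: derivative_eq_intros)
    have "linear (D (a + t *\<^sub>R v))"
      using d[OF that] has_derivative_linear by blast
    then have "(\<lambda>h. D (a + t *\<^sub>R v) (h *\<^sub>R v)) = (\<lambda>h. h * D (a + t *\<^sub>R v) v)"
      by (simp add: linear_scale)
    then show ?thesis
      using diff_chain_at[OF line d[OF that]]
      by (simp add: o_def has_field_derivative_def mult.commute[of _ "D (a + t *\<^sub>R v) v"])
  qed
  then obtain t where "0 < t" "t < r" "\<phi> (a + r *\<^sub>R v) - \<phi> (a + 0 *\<^sub>R v) = (r - 0) * D (a + t *\<^sub>R v) v"
    using MVT2[OF r, of "\<lambda>t. \<phi> (a + t *\<^sub>R v)" "\<lambda>t. D (a + t *\<^sub>R v) v"] by blast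
  then show ?thesis by auto
qed

lemma second_difference_mvt:
  fixes h :: "'a::real_normed_vector \<Rightarrow> real"
  assumes r: "0 < r"
    and square: "\<And>s t. 0 \<le> s \<Longrightarrow> s \<le> r \<Longrightarrow> 0 \<le> t \<Longrightarrow> t \<le> r \<Longrightarrow> p + s *\<^sub>R x + t *\<^sub>R y \<in> U"
    and dh: "\<And>q. q \<in> U \<Longrightarrow> (h has_derivative Dh q) (at q)"
    and dhx: "\<And>q. q \<in> U \<Longrightarrow> ((\<lambda>q. Dh q x) has_derivative D2 q) (at q)"
  shows "\<exists>s t. 0 < s \<and> s < r \<and> 0 < t \<and> t < r \<and>
    h (p + r *\<^sub>R x + r *\<^sub>R y) - h (p + r *\<^sub>R x) - h (p + r *\<^sub>R y) + h p = r^2 * D2 (p + s *\<^sub>R x + t *\<^sub>R y) y"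
proof -
  have "\<exists>s. 0 < s \<and> s < r \<and>
      (h (p + r *\<^sub>R x + r *\<^sub>R y) - h (p + r *\<^sub>R x)) - (h (p + r *\<^sub>R y) - h p)
        = r * (Dh (p + s *\<^sub>R x + r *\<^sub>R y) x - Dh (p + s *\<^sub>R x) x)"
  proof (rule mvt_along_line[OF r, of "\<lambda>q. h (q + r *\<^sub>R y) - h q", simplified])
    fix t assume t: "0 \<le> t" "t \<le> r"
    have shift: "((\<lambda>q. q + r *\<^sub>R y) has_derivative id) (at (p + t *\<^sub>R x))"
      by (auto intro!: derivative_eq_intros simp: id_def)
    have "((\<lambda>q. h (q + r *\<^sub>R y)) has_derivative Dh (p + t *\<^sub>R x + r *\<^sub>R y)) (at (p + t *\<^sub>R x))"
      using diff_chain_at[OF shift dh[OF square[OF t order_less_imp_le[OF r] order_refl]]]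
      by (simp add: o_def)
    then show "((\<lambda>q. h (q + r *\<^sub>R y) - h q) has_derivative
        (\<lambda>v. Dh (p + t *\<^sub>R x + r *\<^sub>R y) v - Dh (p + t *\<^sub>R x) v)) (at (p + t *\<^sub>R x))"
      using square[OF t, of 0] r by (intro has_derivative_diff dh) auto
  qed
  then obtain s where s: "0 < s" "s < r"
    and \<Delta>: "h (p + r *\<^sub>R x + r *\<^sub>R y) - h (p + r *\<^sub>R x) - h (p + r *\<^sub>R y) + h p
             = r * (Dh (p + s *\<^sub>R x + r *\<^sub>R y) x - Dh (p + s *\<^sub>R x) x)"
    by (auto simp: algebra_simps)
  have "\<exists>t. 0 < t \<and> t < r \<and>
      Dh (p + s *\<^sub>R x + r *\<^sub>R y) x - Dh (p + s *\<^sub>R x) x = r * D2 (p + s *\<^sub>R x + t *\<^sub>R y) y"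
    using s by (intro mvt_along_line[OF r, of "\<lambda>q. Dh q x"] dhx square) auto
  then obtain t where "0 < t" "t < r"
    "Dh (p + s *\<^sub>R x + r *\<^sub>R y) x - Dh (p + s *\<^sub>R x) x = r * D2 (p + s *\<^sub>R x + t *\<^sub>R y) y"
    by blast
  with s \<Delta> show ?thesis
    by (intro exI[of _ s] exI[of _ t]) (simp add: power2_eq_square)
qed

lemma eq_if_eq_arbitrarily_near:
  fixes F1 F2 :: "'a::metric_space \<Rightarrow> real"
  assumes "isCont F1 p" "isCont F2 p"
    and near: "\<And>d. d > 0 \<Longrightarrow> \<exists>q1 q2. dist q1 p < d \<and> dist q2 p < d \<and> F1 q1 = F2 q2"
  shows "F1 p = F2 p"
proof -
  obtain q1 q2 :: "nat \<Rightarrow> 'a"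
    where q: "\<And>n. dist (q1 n) p < 1 / Suc n \<and> dist (q2 n) p < 1 / Suc n \<and> F1 (q1 n) = F2 (q2 n)"
    using near[of "1 / Suc _"] by (metis of_nat_0_less_iff divide_pos_pos zero_less_Suc zero_less_one)
  have "q1 \<longlonglongrightarrow> p" "q2 \<longlonglongrightarrow> p"
    using q by (auto intro!: tendsto_dist_iff[THEN iffD2]
        Lim_null_comparison[OF _ LIMSEQ_Suc[OF lim_const_over_n[of 1]]]
        simp: eventually_sequentially less_imp_le)
  moreover have "(\<lambda>n. F1 (q1 n)) = (\<lambda>n. F2 (q2 n))"
    using q by simp
  ultimately have "(\<lambda>n. F1 (q1 n)) \<longlonglongrightarrow> F1 p" "(\<lambda>n. F1 (q1 n)) \<longlonglongrightarrow> F2 p"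
    using isCont_tendsto_compose[OF assms(1)] isCont_tendsto_compose[OF assms(2)] by metis+
  then show ?thesis by (rule LIMSEQ_unique)
qed

lemma small_parallelogram:
  fixes p x y :: "'a::real_normed_vector"
  assumes e: "e > 0"
  obtains r where "r > 0" "\<And>s t. 0 \<le> s \<Longrightarrow> s \<le> r \<Longrightarrow> 0 \<le> t \<Longrightarrow> t \<le> r \<Longrightarrow> dist (p + s *\<^sub>R x + t *\<^sub>R y) p < e"
proof
  define r where "r = e / (2 * (norm x + norm y + 1))"
  show "r > 0"
    using e by (simp add: r_def add_nonneg_pos)
  fix s t assume st: "0 \<le> s" "s \<le> r" "0 \<le> t" "t \<le> r"
  have "dist (p + s *\<^sub>R x + t *\<^sub>R y) p \<le> s * norm x + t * norm y"
    using norm_triangle_ineq[of "s *\<^sub>R x" "t *\<^sub>R y"] st by (simp add: dist_norm)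
  also have "\<dots> \<le> r * (norm x + norm y)"
    using st by (simp add: distrib_left add_mono mult_right_mono)
  also have "\<dots> = e * ((norm x + norm y) / (2 * (norm x + norm y + 1)))"
    by (simp add: r_def)
  also have "\<dots> < e * 1"
    using e by (intro mult_strict_left_mono) (auto simp: divide_less_eq add_nonneg_pos)
  finally show "dist (p + s *\<^sub>R x + t *\<^sub>R y) p < e" by simp
qed

text \<open>Both mixed second derivatives arise from the same second difference
  \<open>h (p + r x + r y) - h (p + r x) - h (p + r y) + h p\<close>.\<close>
lemma mixed_derivatives_agree_nearby:
  fixes h :: "'a::real_normed_vector \<Rightarrow> real"
  assumes U: "open U" and h: "C_inf_on U h" and p: "p \<in> U" and d: "d > 0"
  shows "\<exists>q1 q2. dist q1 p < d \<and> dist q2 p < d \<and>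
    frechet_derivative (\<lambda>q. frechet_derivative h (at q) y) (at q1) x =
    frechet_derivative (\<lambda>q. frechet_derivative h (at q) x) (at q2) y"
proof -
  let ?F = "\<lambda>x y q. frechet_derivative (\<lambda>q. frechet_derivative h (at q) x) (at q) y"
  obtain d0 where d0: "d0 > 0" "ball p d0 \<subseteq> U"
    using U p open_contains_ball by blast
  have "min d d0 > 0"
    using d d0 by simp
  then obtain r where r: "r > 0"
    and near: "\<And>s t. 0 \<le> s \<Longrightarrow> s \<le> r \<Longrightarrow> 0 \<le> t \<Longrightarrow> t \<le> r \<Longrightarrow> dist (p + s *\<^sub>R x + t *\<^sub>R y) p < min d d0"
    by (rule small_parallelogram[where p = p and x = x and y = y]) blast
  have square: "p + s *\<^sub>R x + t *\<^sub>R y \<in> U" "p + t *\<^sub>R y + s *\<^sub>R x \<in> U"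
    if "0 \<le> s" "s \<le> r" "0 \<le> t" "t \<le> r" for s t
    using near[OF that] d0 by (auto simp: dist_commute add_ac)
  have dh: "(h has_derivative frechet_derivative h (at q)) (at q)" if "q \<in> U" for q
    using C_inf_on_has_derivative[OF h that] .
  have dhx: "((\<lambda>q. frechet_derivative h (at q) v) has_derivative
      frechet_derivative (\<lambda>q. frechet_derivative h (at q) v) (at q)) (at q)" if "q \<in> U" for q v
    using C_inf_on_has_derivative[OF C_inf_on_frechet_derivative[OF h] that] .
  obtain s1 t1 where st1: "0 < s1" "s1 < r" "0 < t1" "t1 < r"
    and \<Delta>1: "h (p + r *\<^sub>R x + r *\<^sub>R y) - h (p + r *\<^sub>R x) - h (p + r *\<^sub>R y) + h p
              = r^2 * ?F x y (p + s1 *\<^sub>R x + t1 *\<^sub>R y)"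
    using second_difference_mvt[OF r square(1) dh dhx] by blast
  obtain s2 t2 where st2: "0 < s2" "s2 < r" "0 < t2" "t2 < r"
    and \<Delta>2: "h (p + r *\<^sub>R y + r *\<^sub>R x) - h (p + r *\<^sub>R y) - h (p + r *\<^sub>R x) + h p
              = r^2 * ?F y x (p + s2 *\<^sub>R y + t2 *\<^sub>R x)"
    using second_difference_mvt[OF r square(2) dh dhx] by blast
  have "r^2 * ?F y x (p + s2 *\<^sub>R y + t2 *\<^sub>R x) = r^2 * ?F x y (p + s1 *\<^sub>R x + t1 *\<^sub>R y)"
    using \<Delta>1 \<Delta>2 by (simp only: add_ac)
  then have "?F y x (p + s2 *\<^sub>R y + t2 *\<^sub>R x) = ?F x y (p + s1 *\<^sub>R x + t1 *\<^sub>R y)"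
    using r by simp
  moreover have "dist (p + s1 *\<^sub>R x + t1 *\<^sub>R y) p < d" "dist (p + s2 *\<^sub>R y + t2 *\<^sub>R x) p < d"
    using near[of s1 t1] near[of t2 s2] st1 st2 by (auto simp: add_ac)
  ultimately show ?thesis
    by blast
qed

lemma C_inf_on_frechet_derivative_commute:
  fixes h :: "'a::real_normed_vector \<Rightarrow> real"
  assumes U: "open U" and h: "C_inf_on U h" and p: "p \<in> U"
  shows "frechet_derivative (\<lambda>q. frechet_derivative h (at q) y) (at p) x =
         frechet_derivative (\<lambda>q. frechet_derivative h (at q) x) (at p) y"
proof -
  have "isCont (\<lambda>q. frechet_derivative (\<lambda>q. frechet_derivative h (at q) v) (at q) w) p" for v w
    using C_inf_on_has_derivative[OF C_inf_on_frechet_derivative[OF C_inf_on_frechet_derivative[OF h]]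
      p]
    by (rule has_derivative_continuous)
  from eq_if_eq_arbitrarily_near[OF this this mixed_derivatives_agree_nearby[OF U h p]]
  show ?thesis .
qed

section \<open>The Levi-Civita connection of a metric on an open set\<close>

locale riemannian =
  fixes U :: "pt set" and g :: "pt \<Rightarrow> pt \<Rightarrow> pt \<Rightarrow> real"
  assumes riemannian_metric: "riemannian_metric U g"
begin

lemma open_U: "open U"
  using riemannian_metric unfolding riemannian_metric_def by blast

lemma metric_sym: "p \<in> U \<Longrightarrow> g p x y = g p y x"
  using riemannian_metric unfolding riemannian_metric_def by blast

lemma metric_pos: "p \<in> U \<Longrightarrow> x \<noteq> 0 \<Longrightarrow> g p x x > 0"
  using riemannian_metric unfolding riemannian_metric_def by blast

lemma metric_C_inf: "C_inf_on U (\<lambda>p. g p x y)"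
  using riemannian_metric unfolding riemannian_metric_def by blast

lemma metric_bilinear: "p \<in> U \<Longrightarrow> g p (a *\<^sub>R x + b *\<^sub>R y) z = a * g p x z + b * g p y z"
  using riemannian_metric unfolding riemannian_metric_def by blast

lemma metric_linear_left: "p \<in> U \<Longrightarrow> linear (\<lambda>x. g p x z)"
  using metric_bilinear[of p 1 _ 1 _ z] metric_bilinear[of p _ _ 0 _ z] by (intro linearI) simp_all

lemma metric_linear_right: "p \<in> U \<Longrightarrow> linear (\<lambda>z. g p x z)"
  using metric_linear_left[of p x] by (simp add: metric_sym[of p x])

lemmas metric_simps =
  linear_add[OF metric_linear_left] linear_add[OF metric_linear_right]
  linear_scale[OF metric_linear_left] linear_scale[OF metric_linear_right]
  linear_diff[OF metric_linear_left] linear_diff[OF metric_linear_right]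
  linear_neg[OF metric_linear_left] linear_neg[OF metric_linear_right]
  linear_0[OF metric_linear_left] linear_0[OF metric_linear_right]

lemma metric_axis_expansion:
  assumes p: "p \<in> U"
  shows "g p v w = (\<Sum>i\<in>UNIV. \<Sum>j\<in>UNIV. v$i * w$j * g p (axis i 1) (axis j 1))"
proof -
  have "g p v w = (\<Sum>i\<in>UNIV. v$i * g p (axis i 1) w)"
    using linear_axis_expansion[OF metric_linear_left[OF p]] .
  also have "\<dots> = (\<Sum>i\<in>UNIV. v$i * (\<Sum>j\<in>UNIV. w$j * g p (axis i 1) (axis j 1)))"
    by (rule sum.cong[OF refl]) (subst linear_axis_expansion[OF metric_linear_right[OF p]], rule refl)
  finally show ?thesis
    by (simp add: sum_distrib_left mult.assoc)
qed

lemma metric_has_derivative: "p \<in> U \<Longrightarrow> ((\<lambda>q. g q v w) has_derivative (\<lambda>x. dg g p x v w)) (at p)"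
  unfolding dg_def using C_inf_on_has_derivative[OF metric_C_inf] by blast

lemma dg_linear_direction: "p \<in> U \<Longrightarrow> linear (\<lambda>x. dg g p x v w)"
  using metric_has_derivative has_derivative_linear by blast

lemma dg_axis_expansion:
  assumes p: "p \<in> U"
  shows "dg g p x v w = (\<Sum>i\<in>UNIV. \<Sum>j\<in>UNIV. v$i * w$j * dg g p x (axis i 1) (axis j 1))"
proof -
  have "((\<lambda>q. \<Sum>i\<in>UNIV. \<Sum>j\<in>UNIV. v$i * w$j * g q (axis i 1) (axis j 1)) has_derivative
        (\<lambda>x. \<Sum>i\<in>UNIV. \<Sum>j\<in>UNIV. v$i * w$j * dg g p x (axis i 1) (axis j 1))) (at p)"
    by (intro has_derivative_sum has_derivative_mult_right metric_has_derivative[OF p])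
  from has_derivative_unique_on_open[OF open_U p metric_axis_expansion metric_has_derivative[OF p] this]
  show ?thesis
    by (rule fun_cong)
qed

lemma dg_sym:
  assumes p: "p \<in> U"
  shows "dg g p x v w = dg g p x w v"
  using has_derivative_unique_on_open[OF open_U p metric_sym metric_has_derivative[OF p]
      metric_has_derivative[OF p]]
  by (rule fun_cong)

lemma dg_linear_middle: "p \<in> U \<Longrightarrow> linear (\<lambda>v. dg g p x v w)"
  unfolding dg_axis_expansion[of p x _ w]
  by (rule linearI) (simp_all add: distrib_right sum.distrib sum_distrib_left mult.assoc)

lemma dg_linear_right: "p \<in> U \<Longrightarrow> linear (\<lambda>w. dg g p x v w)"
  using dg_linear_middle[of p x v] by (simp add: dg_sym[of p x v])

lemma metric_nondegenerate:
  assumes p: "p \<in> U" and eq: "\<And>z. g p w z = g p w' z"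
  shows "w = w'"
proof -
  have "g p (w - w') (w - w') = 0"
    using eq by (simp add: metric_simps[OF p])
  then show ?thesis
    using metric_pos[OF p, of "w - w'"] by fastforce
qed

lemma metric_orthonormal_expansion:
  assumes p: "p \<in> U"
    and on: "g p e1 e1 = 1" "g p e2 e2 = 1" "g p e3 e3 = 1"
           "g p e1 e2 = 0" "g p e1 e3 = 0" "g p e2 e3 = 0"
  shows "v = g p v e1 *\<^sub>R e1 + g p v e2 *\<^sub>R e2 + g p v e3 *\<^sub>R e3"
proof -
  define L where "L x = (vector [g p x e1, g p x e2, g p x e3] :: real^3)" for x
  have on': "g p e2 e1 = 0" "g p e3 e1 = 0" "g p e3 e2 = 0"
    using on metric_sym[OF p] by metis+
  have lin: "linear L"
    by (rule linearI) (simp_all add: L_def vec_eq_iff forall_3 vector_3 metric_simps[OF p])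
  have "L (y$1 *\<^sub>R e1 + y$2 *\<^sub>R e2 + y$3 *\<^sub>R e3) = y" for y
    using on on' by (simp add: L_def vec_eq_iff forall_3 vector_3 metric_simps[OF p])
  then have "inj L"
    by (intro linear_surj_imp_inj[OF lin] surjI)
  moreover have "L (v - (g p v e1 *\<^sub>R e1 + g p v e2 *\<^sub>R e2 + g p v e3 *\<^sub>R e3)) = 0"
    using on on' by (simp add: L_def vec_eq_iff forall_3 vector_3 metric_simps[OF p])
  ultimately show ?thesis
    using lin linear_0 by (metis injD eq_iff_diff_eq_0)
qed

definition koszul :: "pt \<Rightarrow> pt \<Rightarrow> pt \<Rightarrow> pt \<Rightarrow> real" where
  "koszul p x y z = (dg g p x y z + dg g p y x z - dg g p z x y) / 2"

lemma koszul_sym: "p \<in> U \<Longrightarrow> koszul p x y z = koszul p y x z"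
  unfolding koszul_def using dg_sym[of p z x y] by simp

lemma koszul_linear_right:
  assumes p: "p \<in> U"
  shows "linear (\<lambda>z. koszul p x y z)"
proof -
  note l = dg_linear_right[OF p, of x y] dg_linear_right[OF p, of y x] dg_linear_direction[OF p, of x y]
  show ?thesis
    unfolding koszul_def
    by (rule linearI) (simp_all add: linear_add[OF l(1)] linear_add[OF l(2)] linear_add[OF l(3)]
        linear_scale[OF l(1)] linear_scale[OF l(2)] linear_scale[OF l(3)] algebra_simps
        add_divide_distrib diff_divide_distrib)
qed

lemma koszul_linear_middle:
  assumes p: "p \<in> U"
  shows "linear (\<lambda>y. koszul p x y z)"
proof -
  note l = dg_linear_middle[OF p, of x z] dg_linear_direction[OF p, of x z]
     dg_linear_right[OF p, of z x]
  show ?thesis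
    unfolding koszul_def
    by (rule linearI) (simp_all add: linear_add[OF l(1)] linear_add[OF l(2)] linear_add[OF l(3)]
        linear_scale[OF l(1)] linear_scale[OF l(2)] linear_scale[OF l(3)] algebra_simps
        add_divide_distrib diff_divide_distrib)
qed

definition gram :: "pt \<Rightarrow> real^3^3" where
  "gram p = (\<chi> i j. g p (axis i 1) (axis j 1))"

lemma gram_mult_vector:
  assumes p: "p \<in> U"
  shows "gram p *v w = (\<chi> i. g p w (axis i 1))"
proof -
  have "g p (axis i 1) w = (\<Sum>j\<in>UNIV. w$j * g p (axis i 1) (axis j 1))" for i
    by (rule linear_axis_expansion[OF metric_linear_right[OF p]])
  then show ?thesis
    by (simp add: vec_eq_iff matrix_vector_mult_def gram_def metric_sym[OF p, of _ w] mult.commute)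
qed

lemma det_gram_nonzero:
  assumes p: "p \<in> U"
  shows "det (gram p) \<noteq> 0"
proof -
  have "w = 0" if "gram p *v w = 0" for w
  proof -
    have "\<forall>i. g p w (axis i 1) = 0"
      using that by (simp add: gram_mult_vector[OF p] vec_eq_iff)
    then have "g p w w = 0"
      by (simp add: linear_axis_expansion[OF metric_linear_right[OF p], of w w])
    then show "w = 0"
      using metric_pos[OF p, of w] by fastforce
  qed
  then have "inj ((*v) (gram p))"
    by (simp add: linear_injective_0 matrix_vector_mul_linear)
  then show ?thesis
    using det_nz_iff_inj[OF matrix_vector_mul_linear[of "gram p"]]
      by (simp add: matrix_of_matrix_vector_mul)
qed

text \<open>Solving the Koszul formula for the Christoffel term by Cramer's rule exhibits it as a
  rational function of the metric coefficients and their derivatives.\<close>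
definition christoffel_formula :: "pt \<Rightarrow> pt \<Rightarrow> pt \<Rightarrow> pt" where
  "christoffel_formula p x y =
    (\<chi> k. det (\<chi> i j. if j = k then koszul p x y (axis i 1) else gram p $ i $ j) / det (gram p))"

lemma metric_christoffel_formula:
  assumes p: "p \<in> U"
  shows "g p (christoffel_formula p x y) z = koszul p x y z"
proof -
  have "gram p *v christoffel_formula p x y = (\<chi> i. koszul p x y (axis i 1))"
    unfolding christoffel_formula_def by (subst cramer[OF det_gram_nonzero[OF p]]) (simp cong: if_cong)
  then have "g p (christoffel_formula p x y) (axis i 1) = koszul p x y (axis i 1)" for i
    by (simp add: gram_mult_vector[OF p] vec_eq_iff)
  then have "g p (christoffel_formula p x y) z = (\<Sum>i\<in>UNIV. z$i * koszul p x y (axis i 1))"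
    by (simp add: linear_axis_expansion[OF metric_linear_right[OF p], of _ z])
  also have "\<dots> = koszul p x y z"
    by (rule linear_axis_expansion[OF koszul_linear_right[OF p], symmetric])
  finally show ?thesis .
qed

lemma christoffel_eq_formula:
  assumes p: "p \<in> U"
  shows "christoffel g p x y = christoffel_formula p x y"
  unfolding christoffel_def koszul_def[symmetric]
proof (rule the_equality)
  show "\<forall>z. g p (christoffel_formula p x y) z = koszul p x y z"
    using metric_christoffel_formula[OF p] by blast
next
  fix w assume "\<forall>z. g p w z = koszul p x y z"
  then show "w = christoffel_formula p x y"
    using metric_christoffel_formula[OF p] by (intro metric_nondegenerate[OF p]) simp
qed

lemma metric_christoffel: "p \<in> U \<Longrightarrow> g p (christoffel g p x y) z = koszul p x y z"
  by (simp add: christoffel_eq_formula metric_christoffel_formula)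

lemma christoffel_unique: "p \<in> U \<Longrightarrow> (\<And>z. g p w z = koszul p x y z) \<Longrightarrow> christoffel g p x y = w"
  by (rule metric_nondegenerate) (auto simp: metric_christoffel)

lemma christoffel_sym: "p \<in> U \<Longrightarrow> christoffel g p x y = christoffel g p y x"
  by (rule christoffel_unique) (auto simp: metric_christoffel koszul_sym)

lemma christoffel_linear_right:
  assumes p: "p \<in> U"
  shows "linear (\<lambda>y. christoffel g p x y)"
proof (rule linearI)
  note l = koszul_linear_middle[OF p]
  show "christoffel g p x (y1 + y2) = christoffel g p x y1 + christoffel g p x y2" for y1 y2
    by (rule christoffel_unique[OF p])
      (simp add: metric_simps[OF p] metric_christoffel[OF p] linear_add[OF l])
  show "christoffel g p x (c *\<^sub>R y) = c *\<^sub>R christoffel g p x y" for c y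
    by (rule christoffel_unique[OF p])
      (simp add: metric_simps[OF p] metric_christoffel[OF p] linear_scale[OF l])
qed

lemma christoffel_linear_left: "p \<in> U \<Longrightarrow> linear (\<lambda>x. christoffel g p x y)"
  using christoffel_linear_right[of p y] by (simp add: christoffel_sym[of p y])

lemmas christoffel_simps =
  linear_add[OF christoffel_linear_left] linear_add[OF christoffel_linear_right]
  linear_scale[OF christoffel_linear_left] linear_scale[OF christoffel_linear_right]
  linear_diff[OF christoffel_linear_left] linear_diff[OF christoffel_linear_right]
  linear_neg[OF christoffel_linear_left] linear_neg[OF christoffel_linear_right]
  linear_0[OF christoffel_linear_left] linear_0[OF christoffel_linear_right]

lemma christoffel_axis_expansion:
  assumes p: "p \<in> U"
  shows "christoffel g p v w $ k =
      (\<Sum>i\<in>UNIV. \<Sum>j\<in>UNIV. v$i * w$j * christoffel g p (axis i 1) (axis j 1) $ k)"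
proof -
  have l1: "linear (\<lambda>v. christoffel g p v w $ k)" for w
    by (rule linearI) (simp_all add: christoffel_simps[OF p])
  have l2: "linear (\<lambda>w. christoffel g p v w $ k)" for v
    by (rule linearI) (simp_all add: christoffel_simps[OF p])
  have "christoffel g p v w $ k = (\<Sum>i\<in>UNIV. v$i * christoffel g p (axis i 1) w $ k)"
    by (rule linear_axis_expansion[OF l1])
  also have "\<dots> = (\<Sum>i\<in>UNIV. v$i * (\<Sum>j\<in>UNIV. w$j * christoffel g p (axis i 1) (axis j 1) $ k))"
    by (rule sum.cong[OF refl]) (subst linear_axis_expansion[OF l2], rule refl)
  finally show ?thesis
    by (simp add: sum_distrib_left mult.assoc)
qed

lemma dg_christoffel:
  "p \<in> U \<Longrightarrow> dg g p x v w = g p (christoffel g p x v) w + g p v (christoffel g p x w)"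
  using metric_christoffel[of p x v w] metric_christoffel[of p x w v] metric_sym[of p v]
    dg_sym[of p] unfolding koszul_def by (simp add: field_simps)

lemma dg_C_inf: "C_inf_on U (\<lambda>q. dg g q x y z)"
  unfolding dg_def by (rule C_inf_on_frechet_derivative[OF metric_C_inf])

lemma christoffel_vf_smooth: "vf_smooth U (\<lambda>q. christoffel g q x y)"
  unfolding vf_smooth_def
proof
  fix k
  have koszul: "C_inf_on U (\<lambda>q. koszul q x y z)" for z
    unfolding koszul_def using open_U
    by (intro C_inf_on_divide C_inf_on_diff C_inf_on_add dg_C_inf C_inf_on_const) auto
  have entries: "C_inf_on U (\<lambda>q. (\<chi> i j. if j = k then koszul q x y (axis i 1)
      else gram q $ i $ j) $ i $ j)"
    for i j
    by (cases "j = k") (simp_all add: koszul gram_def metric_C_inf)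
  have gram: "C_inf_on U (\<lambda>q. gram q $ i $ j)" for i j
    by (simp add: gram_def metric_C_inf)
  show "C_inf_on U (\<lambda>q. christoffel g q x y $ k)"
    using open_U det_gram_nonzero
    by (intro C_inf_on_cong[OF open_U C_inf_on_divide[OF open_U C_inf_on_det[OF open_U entries]
          C_inf_on_det[OF open_U gram]]]) (simp_all add: christoffel_eq_formula christoffel_formula_def)
qed

lemma metric_along_has_derivative:
  fixes Q V W :: "'a::real_normed_vector \<Rightarrow> pt"
  assumes S: "open S" "t \<in> S" "\<forall>t\<in>S. Q t \<in> U"
    and dQ: "(Q has_derivative Q') (at t)" and dV: "(V has_derivative V') (at t)"
    and dW: "(W has_derivative W') (at t)"
  shows "((\<lambda>t. g (Q t) (V t) (W t)) has_derivative
     (\<lambda>h. g (Q t) (V' h + christoffel g (Q t) (Q' h) (V t)) (W t)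
        + g (Q t) (V t) (W' h + christoffel g (Q t) (Q' h) (W t)))) (at t)"
proof -
  have Qt: "Q t \<in> U" using S by auto
  let ?G = "\<lambda>q i j. g q (axis i 1) (axis j 1)"
  have dVi: "((\<lambda>t. V t $ i) has_derivative (\<lambda>h. V' h $ i)) (at t)" for i
    using dV has_derivative_vec_nth_iff by blast
  have dWi: "((\<lambda>t. W t $ i) has_derivative (\<lambda>h. W' h $ i)) (at t)" for i
    using dW has_derivative_vec_nth_iff by blast
  have dG: "((\<lambda>t. ?G (Q t) i j) has_derivative
      (\<lambda>h. dg g (Q t) (Q' h) (axis i 1) (axis j 1))) (at t)" for i j
    using diff_chain_at[OF dQ metric_has_derivative[OF Qt]] by (simp add: o_def)
  have "((\<lambda>t. \<Sum>i\<in>UNIV. \<Sum>j\<in>UNIV. V t $ i * W t $ j * ?G (Q t) i j) has_derivative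
    (\<lambda>h. \<Sum>i\<in>UNIV. \<Sum>j\<in>UNIV. V t $ i * W t $ j * dg g (Q t) (Q' h) (axis i 1) (axis j 1) +
        (V t $ i * W' h $ j + V' h $ i * W t $ j) * ?G (Q t) i j)) (at t)"
    by (intro has_derivative_sum has_derivative_mult dVi dWi dG)
  then have "((\<lambda>t. g (Q t) (V t) (W t)) has_derivative
    (\<lambda>h. \<Sum>i\<in>UNIV. \<Sum>j\<in>UNIV. V t $ i * W t $ j * dg g (Q t) (Q' h) (axis i 1) (axis j 1) +
        (V t $ i * W' h $ j + V' h $ i * W t $ j) * ?G (Q t) i j)) (at t)"
    by (rule has_derivative_transform_within_open[OF _ S(1,2)])
      (use S metric_axis_expansion in auto)
  moreover have "(\<Sum>i\<in>UNIV. \<Sum>j\<in>UNIV. V t $ i * W t $ j * dg g (Q t) (Q' h) (axis i 1) (axis j 1) +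
        (V t $ i * W' h $ j + V' h $ i * W t $ j) * ?G (Q t) i j) =
      g (Q t) (V' h) (W t) + g (Q t) (V t) (W' h) + dg g (Q t) (Q' h) (V t) (W t)" for h
    unfolding metric_axis_expansion[OF Qt, of "V' h"] metric_axis_expansion[OF Qt, of "V t" "W' h"]
      dg_axis_expansion[OF Qt, of _ "V t"]
    by (simp add: sum.distrib algebra_simps)
  ultimately show ?thesis
    by (simp add: dg_christoffel[OF Qt] metric_simps[OF Qt] algebra_simps)
qed

lemma christoffel_has_derivative:
  "p \<in> U \<Longrightarrow> ((\<lambda>q. christoffel g q y z) has_derivative
      frechet_derivative (\<lambda>q. christoffel g q y z) (at p)) (at p)"
  using vf_smooth_has_derivative[OF christoffel_vf_smooth] .

lemma metric_cov_deriv_christoffel: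
  assumes p: "p \<in> U"
  shows "g p (cov_deriv g (\<lambda>q. christoffel g q y z) p x) z
      = frechet_derivative (\<lambda>q. dg g q y z z) (at p) x / 2
        - g p (christoffel g p y z) (christoffel g p x z)"
proof -
  have compat: "((\<lambda>q. g q (christoffel g q y z) z) has_derivative
      (\<lambda>x. g p (frechet_derivative (\<lambda>q. christoffel g q y z) (at p) x
              + christoffel g p x (christoffel g p y z)) z
         + g p (christoffel g p y z) (0 + christoffel g p x z))) (at p)"
    using metric_along_has_derivative[OF open_U p _ has_derivative_ident
        christoffel_has_derivative[OF p]
        has_derivative_const[of z]]
    by simp
  have koszul: "((\<lambda>q. dg g q y z z / 2) has_derivative
      (\<lambda>x. frechet_derivative (\<lambda>q. dg g q y z z) (at p) x / 2)) (at p)"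
    using has_derivative_divide'[OF C_inf_on_has_derivative[OF dg_C_inf p] has_derivative_const, of 2]
    by simp
  have "g q (christoffel g q y z) z = dg g q y z z / 2" if "q \<in> U" for q
    using that by (simp add: metric_christoffel koszul_def)
  from fun_cong[OF has_derivative_unique_on_open[OF open_U p this compat koszul], of x]
  show ?thesis
    unfolding cov_deriv_def by (simp add: metric_simps[OF p] algebra_simps)
qed

lemma curvature_metric_self:
  assumes p: "p \<in> U"
  shows "g p (curvature g p x y z) z = 0"
proof -
  have "frechet_derivative (\<lambda>q. dg g q y z z) (at p) x = frechet_derivative (\<lambda>q. dg g q x z z) (at p) y"
    unfolding dg_def by (rule C_inf_on_frechet_derivative_commute[OF open_U metric_C_inf p])
  then show ?thesis
    unfolding curvature_def metric_simps[OF p] metric_cov_deriv_christoffel[OF p]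
    using metric_sym[OF p, of "christoffel g p y z"] by simp
qed

end

section \<open>Unit vector fields with \<open>\<nabla>\<xi> = f (I - \<eta> \<otimes> \<xi>)\<close>\<close>

locale f_kenmotsu_field = riemannian +
  fixes \<xi> :: "pt \<Rightarrow> pt" and f :: "pt \<Rightarrow> real"
  assumes xi_smooth: "vf_smooth U \<xi>" and f_smooth: "C_inf_on U f"
    and xi_unit: "p \<in> U \<Longrightarrow> g p (\<xi> p) (\<xi> p) = 1"
    and cov_deriv_xi: "p \<in> U \<Longrightarrow> cov_deriv g \<xi> p X = f p *\<^sub>R (X - g p X (\<xi> p) *\<^sub>R \<xi> p)"
    and df_wedge_eta:
      "p \<in> U \<Longrightarrow> frechet_derivative f (at p) X * g p Y (\<xi> p)
          - frechet_derivative f (at p) Y * g p X (\<xi> p) = 0"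
begin

abbreviation \<eta> :: "pt \<Rightarrow> pt \<Rightarrow> real" where
  "\<eta> p X \<equiv> g p X (\<xi> p)"

lemma xi_has_derivative: "p \<in> U \<Longrightarrow> (\<xi> has_derivative frechet_derivative \<xi> (at p)) (at p)"
  using vf_smooth_has_derivative[OF xi_smooth] .

lemma f_has_derivative: "p \<in> U \<Longrightarrow> (f has_derivative frechet_derivative f (at p)) (at p)"
  using C_inf_on_has_derivative[OF f_smooth] .

lemma eta_C_inf: "C_inf_on U (\<lambda>q. \<eta> q z)"
proof (rule C_inf_on_cong[OF open_U])
  show "C_inf_on U (\<lambda>q. \<Sum>j\<in>UNIV. \<xi> q $ j * g q z (axis j 1))"
    using xi_smooth unfolding vf_smooth_def
    by (intro C_inf_on_sum[OF open_U] C_inf_on_mult[OF open_U] metric_C_inf) auto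
  show "\<forall>q\<in>U. \<eta> q z = (\<Sum>j\<in>UNIV. \<xi> q $ j * g q z (axis j 1))"
    using linear_axis_expansion[OF metric_linear_right] by blast
qed

lemma eta_has_derivative:
  "p \<in> U \<Longrightarrow> ((\<lambda>q. \<eta> q z) has_derivative frechet_derivative (\<lambda>q. \<eta> q z) (at p)) (at p)"
  using C_inf_on_has_derivative[OF eta_C_inf] .

lemma frechet_derivative_eta:
  assumes p: "p \<in> U"
  shows "frechet_derivative (\<lambda>q. \<eta> q z) (at p) y
      = g p (christoffel g p y z) (\<xi> p) + f p * (g p z y - \<eta> p y * \<eta> p z)"
proof -
  have "((\<lambda>q. \<eta> q z) has_derivative
      (\<lambda>y. g p (0 + christoffel g p y z) (\<xi> p)
           + g p z (frechet_derivative \<xi> (at p) y + christoffel g p y (\<xi> p)))) (at p)"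
    using metric_along_has_derivative[OF open_U p _ has_derivative_ident has_derivative_const
        xi_has_derivative[OF p]]
    by simp
  from fun_cong[OF frechet_derivative_at[OF this, symmetric], of y]
  have "frechet_derivative (\<lambda>q. \<eta> q z) (at p) y
      = g p (christoffel g p y z) (\<xi> p) + g p z (cov_deriv g \<xi> p y)"
    unfolding cov_deriv_def by simp
  then show ?thesis
    unfolding cov_deriv_xi[OF p]
      by (simp add: metric_simps[OF p] metric_sym[OF p, of "\<xi> p"] algebra_simps)
qed

text \<open>Obtained by differentiating \<open>frechet_derivative_eta\<close>, read as an identity for
  \<open>g(\<Gamma>(y, z), \<xi>)\<close>, in the direction \<open>x\<close>.\<close>
lemma metric_cov_deriv_christoffel_xi:
  assumes p: "p \<in> U"
  shows "g p (cov_deriv g (\<lambda>q. christoffel g q y z) p x) (\<xi> p) =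
     frechet_derivative (\<lambda>q. frechet_derivative (\<lambda>q. \<eta> q z) (at q) y) (at p) x
     - frechet_derivative f (at p) x * (g p z y - \<eta> p y * \<eta> p z)
     - f p * (dg g p x z y - frechet_derivative (\<lambda>q. \<eta> q y) (at p) x * \<eta> p z
              - \<eta> p y * frechet_derivative (\<lambda>q. \<eta> q z) (at p) x)
     - f p * (koszul p y z x - \<eta> p x * g p (christoffel g p y z) (\<xi> p))"
proof -
  have compat: "((\<lambda>q. g q (christoffel g q y z) (\<xi> q)) has_derivative
      (\<lambda>x. g p (frechet_derivative (\<lambda>q. christoffel g q y z) (at p) x
              + christoffel g p x (christoffel g p y z)) (\<xi> p)
         + g p (christoffel g p y z) (frechet_derivative \<xi> (at p) x + christoffel g p x (\<xi> p)))) (at p)"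
    using metric_along_has_derivative[OF open_U p _ has_derivative_ident
        christoffel_has_derivative[OF p]
        xi_has_derivative[OF p]]
    by simp
  have identity: "((\<lambda>q. frechet_derivative (\<lambda>q. \<eta> q z) (at q) y - f q * (g q z y - \<eta> q y * \<eta> q z))
     has_derivative (\<lambda>x. frechet_derivative (\<lambda>q. frechet_derivative (\<lambda>q. \<eta> q z) (at q) y) (at p) x
        - (f p * (dg g p x z y - (\<eta> p y * frechet_derivative (\<lambda>q. \<eta> q z) (at p) x
                                  + frechet_derivative (\<lambda>q. \<eta> q y) (at p) x * \<eta> p z))
           + frechet_derivative f (at p) x * (g p z y - \<eta> p y * \<eta> p z)))) (at p)"
    by (intro has_derivative_diff has_derivative_mult f_has_derivative[OF p] metric_has_derivative[OF p]
        eta_has_derivative[OF p]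
          C_inf_on_has_derivative[OF C_inf_on_frechet_derivative[OF eta_C_inf] p])
  have eq: "g q (christoffel g q y z) (\<xi> q) =
      frechet_derivative (\<lambda>q. \<eta> q z) (at q) y - f q * (g q z y - \<eta> q y * \<eta> q z)" if "q \<in> U" for q
    using frechet_derivative_eta[OF that] by simp
  from fun_cong[OF has_derivative_unique_on_open[OF open_U p eq compat identity], of x]
  have "g p (frechet_derivative (\<lambda>q. christoffel g q y z) (at p) x
        + christoffel g p x (christoffel g p y z)) (\<xi> p)
      + g p (christoffel g p y z) (cov_deriv g \<xi> p x)
    = frechet_derivative (\<lambda>q. frechet_derivative (\<lambda>q. \<eta> q z) (at q) y) (at p) x
        - (f p * (dg g p x z y - (\<eta> p y * frechet_derivative (\<lambda>q. \<eta> q z) (at p) x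
                                  + frechet_derivative (\<lambda>q. \<eta> q y) (at p) x * \<eta> p z))
           + frechet_derivative f (at p) x * (g p z y - \<eta> p y * \<eta> p z))"
    unfolding cov_deriv_def by simp
  moreover have "g p (christoffel g p y z) (cov_deriv g \<xi> p x)
      = f p * (koszul p y z x - \<eta> p x * g p (christoffel g p y z) (\<xi> p))"
    unfolding cov_deriv_xi[OF p]
      by (simp add: metric_simps[OF p] metric_christoffel[OF p] algebra_simps)
  ultimately show ?thesis
    unfolding cov_deriv_def by (simp add: algebra_simps)
qed

lemma curvature_xi:
  assumes p: "p \<in> U"
  shows "g p (curvature g p x y z) (\<xi> p) =
     - frechet_derivative f (at p) x * (g p z y - \<eta> p y * \<eta> p z)
     + frechet_derivative f (at p) y * (g p z x - \<eta> p x * \<eta> p z)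
     + (f p)^2 * (\<eta> p y * (g p z x - \<eta> p x * \<eta> p z) - \<eta> p x * (g p z y - \<eta> p y * \<eta> p z))"
proof -
  have schwarz: "frechet_derivative (\<lambda>q. frechet_derivative (\<lambda>q. \<eta> q z) (at q) y) (at p) x =
                 frechet_derivative (\<lambda>q. frechet_derivative (\<lambda>q. \<eta> q z) (at q) x) (at p) y"
    by (rule C_inf_on_frechet_derivative_commute[OF open_U eta_C_inf p])
  have koszul: "koszul p y z x - koszul p x z y = dg g p y z x - dg g p x z y"
    unfolding koszul_def using dg_sym[OF p, of z] dg_sym[OF p, of x] dg_sym[OF p, of y]
    by (simp add: field_simps)
  show ?thesis
    unfolding curvature_def metric_simps[OF p] metric_cov_deriv_christoffel_xi[OF p] schwarz
      frechet_derivative_eta[OF p]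
    using christoffel_sym[OF p, of x y] metric_sym[OF p, of x y] arg_cong[OF koszul, of "\<lambda>t. f p * t"]
    by (simp add: algebra_simps power2_eq_square)
qed

definition df_xi :: "pt \<Rightarrow> real" where
  "df_xi q = frechet_derivative f (at q) (\<xi> q)"

lemma frechet_derivative_f: "q \<in> U \<Longrightarrow> frechet_derivative f (at q) v = df_xi q * \<eta> q v"
  using df_wedge_eta[of q v "\<xi> q"] xi_unit[of q] unfolding df_xi_def by simp

lemma df_xi_C_inf: "C_inf_on U df_xi"
proof (rule C_inf_on_cong[OF open_U])
  show "C_inf_on U (\<lambda>q. \<Sum>j\<in>UNIV. \<xi> q $ j * frechet_derivative f (at q) (axis j 1))"
    using xi_smooth unfolding vf_smooth_def
    by (intro C_inf_on_sum[OF open_U] C_inf_on_mult[OF open_U]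
        C_inf_on_frechet_derivative[OF f_smooth]) auto
  show "\<forall>q\<in>U. df_xi q = (\<Sum>j\<in>UNIV. \<xi> q $ j * frechet_derivative f (at q) (axis j 1))"
    unfolding df_xi_def using linear_axis_expansion f_has_derivative has_derivative_linear by blast
qed

text \<open>Since the Hessian of \<open>f\<close> is symmetric, \<open>df = df_xi \<cdot> \<eta>\<close> forces \<open>d(df_xi)\<close> to be
  a multiple of \<open>\<eta>\<close> as well.\<close>
lemma frechet_derivative_df_xi:
  assumes p: "p \<in> U"
  shows "frechet_derivative df_xi (at p) x = frechet_derivative df_xi (at p) (\<xi> p) * \<eta> p x"
proof -
  define Dh where "Dh x = frechet_derivative df_xi (at p) x" for x
  define E where "E z y = frechet_derivative (\<lambda>q. \<eta> q z) (at p) y" for z y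
  have hessian: "frechet_derivative (\<lambda>q. frechet_derivative f (at q) y) (at p) x
      = df_xi p * E y x + Dh x * \<eta> p y"
    for x y
  proof -
    have "((\<lambda>q. df_xi q * \<eta> q y) has_derivative (\<lambda>x. df_xi p * E y x + Dh x * \<eta> p y)) (at p)"
      unfolding E_def Dh_def
      by (intro has_derivative_mult C_inf_on_has_derivative[OF df_xi_C_inf p] eta_has_derivative[OF p])
    from fun_cong[OF has_derivative_unique_on_open[OF open_U p frechet_derivative_f
          C_inf_on_has_derivative[OF C_inf_on_frechet_derivative[OF f_smooth] p] this], of x]
    show ?thesis .
  qed
  have "E y x = E x y" for x y
    unfolding E_def frechet_derivative_eta[OF p]
      using christoffel_sym[OF p, of x y] metric_sym[OF p, of x y]
    by simp
  then have "Dh x * \<eta> p y = Dh y * \<eta> p x" for x y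
    using hessian[of y x] hessian[of x y]
        C_inf_on_frechet_derivative_commute[OF open_U f_smooth p, of x y]
    by simp
  from this[of x "\<xi> p"] show ?thesis
    unfolding Dh_def using xi_unit[OF p] by simp
qed

end

section \<open>Covariant derivatives along curves\<close>

lemma has_real_derivative_zero_on_open:
  fixes u :: "real \<Rightarrow> real"
  assumes "open I" "s \<in> I" "\<And>t. t \<in> I \<Longrightarrow> u t = 0" "(u has_real_derivative u') (at s)"
  shows "u' = 0"
proof -
  have "((\<lambda>_. 0) has_real_derivative u') (at s)"
    using has_field_derivative_transform_within_open[OF assms(4) assms(1,2)] assms(3) by auto
  then show ?thesis
    using DERIV_const DERIV_unique by blast
qed

lemma C_inf_on_has_real_derivative:
  fixes u :: "real \<Rightarrow> real"
  assumes "C_inf_on I u" "s \<in> I"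
  shows "(u has_real_derivative deriv u s) (at s)"
  using assms by (metis C_inf_on.cases DERIV_deriv_iff_real_differentiable)

lemma C_inf_on_deriv:
  fixes u :: "real \<Rightarrow> real"
  assumes I: "open I" and u: "C_inf_on I u"
  shows "C_inf_on I (deriv u)"
proof (rule C_inf_on_cong[OF I C_inf_on_frechet_derivative[OF u, of 1]], intro ballI)
  fix s assume "s \<in> I"
  from C_inf_on_has_real_derivative[OF u this] C_inf_on_has_derivative[OF u this]
  show "deriv u s = frechet_derivative u (at s) 1"
    by (metis has_derivative_unique has_field_derivative_def mult_1_right)
qed

lemma vf_smooth_has_vector_derivative:
  fixes V :: "real \<Rightarrow> pt"
  assumes "vf_smooth I V" "s \<in> I"
  shows "(V has_vector_derivative (\<chi> i. deriv (\<lambda>t. V t $ i) s)) (at s)"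
proof -
  have "((\<lambda>t. V t $ i) has_real_derivative deriv (\<lambda>t. V t $ i) s) (at s)" for i
    using assms C_inf_on_has_real_derivative unfolding vf_smooth_def by blast
  then show ?thesis
    unfolding has_vector_derivative_def has_field_derivative_def has_derivative_vec_nth_iff
    by (simp add: mult_commute_abs)
qed

lemma vf_smooth_differentiable:
  fixes V :: "real \<Rightarrow> pt"
  shows "vf_smooth I V \<Longrightarrow> s \<in> I \<Longrightarrow> V differentiable (at s)"
  using differentiableI_vector vf_smooth_has_vector_derivative by blast

lemma vf_smooth_vector_derivative:
  fixes V :: "real \<Rightarrow> pt"
  assumes I: "open I" and V: "vf_smooth I V"
  shows "vf_smooth I (\<lambda>s. vector_derivative V (at s))"
  unfolding vf_smooth_def
proof
  fix i
  have "C_inf_on I (deriv (\<lambda>t. V t $ i))"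
    using V I C_inf_on_deriv unfolding vf_smooth_def by blast
  then show "C_inf_on I (\<lambda>s. vector_derivative V (at s) $ i)"
    by (rule C_inf_on_cong[OF I])
      (simp add: vector_derivative_at[OF vf_smooth_has_vector_derivative[OF V]])
qed

lemma vf_smooth_add:
  "open I \<Longrightarrow> vf_smooth I V \<Longrightarrow> vf_smooth I W \<Longrightarrow> vf_smooth I (\<lambda>s. V s + W s)"
  unfolding vf_smooth_def by (simp add: C_inf_on_add)

lemma vf_smooth_scaleR:
  "open I \<Longrightarrow> C_inf_on I a \<Longrightarrow> vf_smooth I V \<Longrightarrow> vf_smooth I (\<lambda>s. a s *\<^sub>R V s)"
  unfolding vf_smooth_def by (simp add: C_inf_on_mult)

locale riemannian_curve = riemannian +
  fixes I :: "real set" and \<gamma> :: "real \<Rightarrow> pt"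
  assumes open_I: "open I" and curve_in_U: "s \<in> I \<Longrightarrow> \<gamma> s \<in> U" and curve_smooth: "vf_smooth I \<gamma>"
begin

abbreviation T :: "real \<Rightarrow> pt" where
  "T \<equiv> velocity \<gamma>"

lemma velocity_smooth: "vf_smooth I T"
  unfolding velocity_def by (rule vf_smooth_vector_derivative[OF open_I curve_smooth])

lemma curve_has_derivative: "s \<in> I \<Longrightarrow> (\<gamma> has_derivative (\<lambda>h. h *\<^sub>R T s)) (at s)"
  using vf_smooth_has_vector_derivative[OF curve_smooth] vector_derivative_at
  unfolding has_vector_derivative_def velocity_def by metis

lemma C_inf_on_along: "C_inf_on U h \<Longrightarrow> C_inf_on I (\<lambda>s. h (\<gamma> s))"
  using C_inf_on_compose[OF open_I _ _ curve_smooth] curve_in_U by blast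

lemma C_inf_on_metric_along:
  assumes V: "vf_smooth I V" and W: "vf_smooth I W"
  shows "C_inf_on I (\<lambda>s. g (\<gamma> s) (V s) (W s))"
proof (rule C_inf_on_cong[OF open_I])
  show "C_inf_on I (\<lambda>s. \<Sum>i\<in>UNIV. \<Sum>j\<in>UNIV. V s $ i * W s $ j * g (\<gamma> s) (axis i 1) (axis j 1))"
    using V W unfolding vf_smooth_def
    by (intro C_inf_on_sum[OF open_I] C_inf_on_mult[OF open_I] C_inf_on_along metric_C_inf) auto
  show "\<forall>s\<in>I. g (\<gamma> s) (V s) (W s)
      = (\<Sum>i\<in>UNIV. \<Sum>j\<in>UNIV. V s $ i * W s $ j * g (\<gamma> s) (axis i 1) (axis j 1))"
    using metric_axis_expansion curve_in_U by blast
qed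

lemma vf_smooth_christoffel_along:
  assumes V: "vf_smooth I V" and W: "vf_smooth I W"
  shows "vf_smooth I (\<lambda>s. christoffel g (\<gamma> s) (V s) (W s))"
  unfolding vf_smooth_def
proof
  fix k
  have "C_inf_on U (\<lambda>q. christoffel g q x y $ k)" for x y
    using christoffel_vf_smooth unfolding vf_smooth_def by blast
  then have "C_inf_on I (\<lambda>s. \<Sum>i\<in>UNIV. \<Sum>j\<in>UNIV. V s $ i * W s $ j
      * christoffel g (\<gamma> s) (axis i 1) (axis j 1) $ k)"
    using V W unfolding vf_smooth_def
    by (intro C_inf_on_sum[OF open_I] C_inf_on_mult[OF open_I] C_inf_on_along) auto
  then show "C_inf_on I (\<lambda>s. christoffel g (\<gamma> s) (V s) (W s) $ k)"
    by (rule C_inf_on_cong[OF open_I]) (simp add: christoffel_axis_expansion curve_in_U)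
qed

lemma vf_smooth_covD: "vf_smooth I V \<Longrightarrow> vf_smooth I (covD g \<gamma> V)"
  unfolding covD_def
  by (intro vf_smooth_add[OF open_I] vf_smooth_vector_derivative[OF open_I]
      vf_smooth_christoffel_along velocity_smooth)

lemma covD_cong:
  assumes "\<forall>t\<in>I. V t = W t" "s \<in> I"
  shows "covD g \<gamma> V s = covD g \<gamma> W s"
proof -
  have "(V has_vector_derivative v) (at s) \<longleftrightarrow> (W has_vector_derivative v) (at s)" for v
    using assms open_I by (intro iffI) (auto intro: has_vector_derivative_transform_within_open)
  then show ?thesis
    unfolding covD_def vector_derivative_def using assms by simp
qed

lemma covD_add:
  assumes "V differentiable (at s)" "W differentiable (at s)" and s: "s \<in> I"
  shows "covD g \<gamma> (\<lambda>s. V s + W s) s = covD g \<gamma> V s + covD g \<gamma> W s"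
proof -
  have "vector_derivative (\<lambda>s. V s + W s) (at s)
      = vector_derivative V (at s) + vector_derivative W (at s)"
    by (rule vector_derivative_add_at[OF assms(1,2)])
  then show ?thesis
    unfolding covD_def by (simp add: christoffel_simps[OF curve_in_U[OF s]])
qed

lemma covD_scaleR:
  assumes a: "(a has_real_derivative a') (at s)" and V: "V differentiable (at s)" and s: "s \<in> I"
  shows "covD g \<gamma> (\<lambda>s. a s *\<^sub>R V s) s = a' *\<^sub>R V s + a s *\<^sub>R covD g \<gamma> V s"
proof -
  have dV: "(V has_vector_derivative vector_derivative V (at s)) (at s)"
    using vector_derivative_works V by blast
  have "vector_derivative (\<lambda>s. a s *\<^sub>R V s) (at s) = a s *\<^sub>R vector_derivative V (at s) + a' *\<^sub>R V s"
    by (rule vector_derivative_at[OF has_vector_derivative_scaleR[OF a dV]])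
  then show ?thesis
    unfolding covD_def by (simp add: christoffel_simps[OF curve_in_U[OF s]] algebra_simps)
qed

lemma metric_covD_has_real_derivative:
  assumes V: "vf_smooth I V" and W: "vf_smooth I W" and s: "s \<in> I"
  shows "((\<lambda>s. g (\<gamma> s) (V s) (W s)) has_real_derivative
     g (\<gamma> s) (covD g \<gamma> V s) (W s) + g (\<gamma> s) (V s) (covD g \<gamma> W s)) (at s)"
proof -
  have p: "\<gamma> s \<in> U" using curve_in_U[OF s] .
  have dV: "(V has_derivative (\<lambda>h. h *\<^sub>R vector_derivative V (at s))) (at s)"
    using vector_derivative_works vf_smooth_differentiable[OF V s]
      unfolding has_vector_derivative_def by blast
  have dW: "(W has_derivative (\<lambda>h. h *\<^sub>R vector_derivative W (at s))) (at s)"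
    using vector_derivative_works vf_smooth_differentiable[OF W s]
      unfolding has_vector_derivative_def by blast
  have "((\<lambda>s. g (\<gamma> s) (V s) (W s)) has_derivative
      (\<lambda>h. g (\<gamma> s) (h *\<^sub>R vector_derivative V (at s) + christoffel g (\<gamma> s) (h *\<^sub>R T s) (V s)) (W s)
         + g (\<gamma> s) (V s) (h *\<^sub>R vector_derivative W (at s)
             + christoffel g (\<gamma> s) (h *\<^sub>R T s) (W s)))) (at s)"
    by (rule metric_along_has_derivative[OF open_I s _ curve_has_derivative[OF s] dV dW])
      (use curve_in_U in blast)
  then show ?thesis
    unfolding has_field_derivative_def
    by (rule has_derivative_eq_rhs)
      (simp add: fun_eq_iff covD_def christoffel_simps[OF p] metric_simps[OF p] algebra_simps)
qed

end

section \<open>Legendre Frenet curves\<close>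

locale legendre_frenet_curve = riemannian_curve + f_kenmotsu_field +
  fixes N B :: "real \<Rightarrow> pt" and k1 k2 :: "real \<Rightarrow> real"
  assumes interval: "is_interval I" and nonempty: "I \<noteq> {}"
    and N_smooth: "vf_smooth I N" and B_smooth: "vf_smooth I B"
    and unit_T: "s \<in> I \<Longrightarrow> g (\<gamma> s) (T s) (T s) = 1"
    and unit_N: "s \<in> I \<Longrightarrow> g (\<gamma> s) (N s) (N s) = 1"
    and unit_B: "s \<in> I \<Longrightarrow> g (\<gamma> s) (B s) (B s) = 1"
    and T_N: "s \<in> I \<Longrightarrow> g (\<gamma> s) (T s) (N s) = 0"
    and T_B: "s \<in> I \<Longrightarrow> g (\<gamma> s) (T s) (B s) = 0"
    and N_B: "s \<in> I \<Longrightarrow> g (\<gamma> s) (N s) (B s) = 0"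
    and k1_pos: "s \<in> I \<Longrightarrow> k1 s > 0" and k2_pos: "s \<in> I \<Longrightarrow> k2 s > 0"
    and frenet_T: "s \<in> I \<Longrightarrow> covD g \<gamma> T s = k1 s *\<^sub>R N s"
    and frenet_N: "s \<in> I \<Longrightarrow> covD g \<gamma> N s = - k1 s *\<^sub>R T s + k2 s *\<^sub>R B s"
    and frenet_B: "s \<in> I \<Longrightarrow> covD g \<gamma> B s = - k2 s *\<^sub>R N s"
    and legendre: "s \<in> I \<Longrightarrow> \<eta> (\<gamma> s) (T s) = 0"
begin

abbreviation X :: "real \<Rightarrow> pt" where
  "X s \<equiv> \<xi> (\<gamma> s)"

lemma X_smooth: "vf_smooth I X"
  using xi_smooth C_inf_on_along unfolding vf_smooth_def by blast

lemma unit_X: "s \<in> I \<Longrightarrow> g (\<gamma> s) (X s) (X s) = 1"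
  using xi_unit curve_in_U by blast

lemma covD_X:
  assumes s: "s \<in> I"
  shows "covD g \<gamma> X s = f (\<gamma> s) *\<^sub>R T s"
proof -
  have p: "\<gamma> s \<in> U" using curve_in_U[OF s] .
  have "(X has_derivative (\<lambda>h. frechet_derivative \<xi> (at (\<gamma> s)) (h *\<^sub>R T s))) (at s)"
    using diff_chain_at[OF curve_has_derivative[OF s] xi_has_derivative[OF p]] by (simp add: o_def)
  then have "vector_derivative X (at s) = frechet_derivative \<xi> (at (\<gamma> s)) (T s)"
    using has_derivative_linear[OF xi_has_derivative[OF p]]
    by (intro vector_derivative_at) (simp add: has_vector_derivative_def linear_scale)
  then have "covD g \<gamma> X s = cov_deriv g \<xi> (\<gamma> s) (T s)"
    unfolding covD_def cov_deriv_def by simp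
  then show ?thesis
    using legendre[OF s] by (simp add: cov_deriv_xi[OF p])
qed

lemma constant_along:
  assumes h: "C_inf_on U h" and dh: "\<And>p v. p \<in> U \<Longrightarrow> frechet_derivative h (at p) v = a p * \<eta> p v"
  shows "\<exists>c. \<forall>s\<in>I. h (\<gamma> s) = c"
proof -
  have "((\<lambda>s. h (\<gamma> s)) has_real_derivative 0) (at s within I)" if s: "s \<in> I" for s
  proof -
    have p: "\<gamma> s \<in> U" using curve_in_U[OF s] .
    have "((\<lambda>s. h (\<gamma> s)) has_derivative (\<lambda>t. frechet_derivative h (at (\<gamma> s)) (t *\<^sub>R T s))) (at s)"
      using diff_chain_at[OF curve_has_derivative[OF s] C_inf_on_has_derivative[OF h p]]
        by (simp add: o_def)
    moreover have "(*) (0::real) = (\<lambda>t. 0)"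
      by auto
    ultimately show ?thesis
      using legendre[OF s] dh[OF p]
      by (simp add: metric_simps[OF p] has_field_derivative_def has_derivative_at_withinI)
  qed
  then show ?thesis
    using has_field_derivative_zero_constant[OF is_interval_convex[OF interval]] by blast
qed

lemma f_constant_along: "\<exists>c. \<forall>s\<in>I. f (\<gamma> s) = c"
  using constant_along[OF f_smooth frechet_derivative_f] .

lemma df_xi_constant_along: "\<exists>m. \<forall>s\<in>I. df_xi (\<gamma> s) = m"
  using constant_along[OF df_xi_C_inf frechet_derivative_df_xi] .

text \<open>\<open>X\<close> is a unit normal of the curve, so \<open>X = \<alpha> N + \<beta> B\<close>. Rotating \<open>(N, B)\<close> by this angle
  gives the orthonormal frame \<open>(T, E, X)\<close>, in which \<open>T\<close> has curvature \<open>\<kappa> 0 = k1 \<beta>\<close> along \<open>E\<close>;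
  \<open>\<kappa> n\<close> is its \<open>n\<close>-th derivative.\<close>
definition \<alpha> :: "real \<Rightarrow> real" where
  "\<alpha> s = g (\<gamma> s) (N s) (X s)"

definition \<beta> :: "real \<Rightarrow> real" where
  "\<beta> s = g (\<gamma> s) (B s) (X s)"

definition \<kappa> :: "nat \<Rightarrow> real \<Rightarrow> real" where
  "\<kappa> n = (deriv ^^ n) (\<lambda>s. k1 s * \<beta> s)"

definition E :: "real \<Rightarrow> pt" where
  "E s = \<beta> s *\<^sub>R N s - \<alpha> s *\<^sub>R B s"

lemma X_frame_expansion:
  assumes s: "s \<in> I"
  shows "X s = \<alpha> s *\<^sub>R N s + \<beta> s *\<^sub>R B s" and "(\<alpha> s)^2 + (\<beta> s)^2 = 1"
proof -
  have p: "\<gamma> s \<in> U" using curve_in_U[OF s] .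
  have "X s = g (\<gamma> s) (X s) (T s) *\<^sub>R T s + g (\<gamma> s) (X s) (N s) *\<^sub>R N s + g (\<gamma> s) (X s) (B s) *\<^sub>R B s"
    using s by (intro metric_orthonormal_expansion[OF p] unit_T unit_N unit_B T_N T_B N_B)
  then show X: "X s = \<alpha> s *\<^sub>R N s + \<beta> s *\<^sub>R B s"
    using legendre[OF s] by (simp add: \<alpha>_def \<beta>_def metric_sym[OF p, of "X s"])
  have "1 = g (\<gamma> s) (\<alpha> s *\<^sub>R N s + \<beta> s *\<^sub>R B s) (\<alpha> s *\<^sub>R N s + \<beta> s *\<^sub>R B s)"
    using unit_X[OF s] X by simp
  also have "\<dots> = (\<alpha> s)^2 + (\<beta> s)^2"
    using unit_N[OF s] unit_B[OF s] N_B[OF s] metric_sym[OF p, of "B s" "N s"]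
    by (simp add: metric_simps[OF p] power2_eq_square algebra_simps)
  finally show "(\<alpha> s)^2 + (\<beta> s)^2 = 1" by simp
qed

lemma k1_smooth: "C_inf_on I k1"
proof (rule C_inf_on_cong[OF open_I
    C_inf_on_metric_along[OF vf_smooth_covD[OF velocity_smooth] N_smooth]])
  show "\<forall>s\<in>I. k1 s = g (\<gamma> s) (covD g \<gamma> T s) (N s)"
    using unit_N frenet_T curve_in_U by (simp add: metric_simps)
qed

lemma \<alpha>_smooth: "C_inf_on I \<alpha>"
  unfolding \<alpha>_def by (rule C_inf_on_metric_along[OF N_smooth X_smooth])

lemma \<beta>_smooth: "C_inf_on I \<beta>"
  unfolding \<beta>_def by (rule C_inf_on_metric_along[OF B_smooth X_smooth])

lemma \<kappa>_smooth: "C_inf_on I (\<kappa> n)"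
  by (induction n) (simp_all add: \<kappa>_def
      C_inf_on_mult[OF open_I k1_smooth \<beta>_smooth] C_inf_on_deriv[OF open_I])

lemma \<kappa>_has_real_derivative: "s \<in> I \<Longrightarrow> (\<kappa> n has_real_derivative \<kappa> (Suc n) s) (at s)"
  using C_inf_on_has_real_derivative[OF \<kappa>_smooth] by (simp add: \<kappa>_def)

lemma E_smooth: "vf_smooth I E"
  unfolding E_def diff_conv_add_uminus scaleR_minus_left[symmetric]
  by (intro vf_smooth_add[OF open_I] vf_smooth_scaleR[OF open_I] \<alpha>_smooth \<beta>_smooth N_smooth B_smooth
      C_inf_on_minus[OF open_I])

lemma metric_frame_T:
  assumes s: "s \<in> I"
  shows "g (\<gamma> s) (a *\<^sub>R T s + b *\<^sub>R E s + e *\<^sub>R X s) (T s) = a"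
proof -
  have p: "\<gamma> s \<in> U" using curve_in_U[OF s] .
  have "g (\<gamma> s) (N s) (T s) = 0" "g (\<gamma> s) (B s) (T s) = 0" "g (\<gamma> s) (X s) (T s) = 0"
    using T_N[OF s] T_B[OF s] legendre[OF s] metric_sym[OF p] by metis+
  then show ?thesis
    using unit_T[OF s] by (simp add: E_def metric_simps[OF p])
qed

lemma metric_frame_X:
  assumes s: "s \<in> I"
  shows "g (\<gamma> s) (a *\<^sub>R T s + b *\<^sub>R E s + e *\<^sub>R X s) (X s) = e"
  using legendre[OF s] unit_X[OF s]
  by (simp add: E_def metric_simps[OF curve_in_U[OF s]] \<alpha>_def[symmetric] \<beta>_def[symmetric] algebra_simps)

text \<open>\<open>c\<close> is the value of \<open>f\<close> along the curve (see \<open>f_constant_along\<close>).\<close>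
context
  fixes c :: real
  assumes f_along: "\<And>s. s \<in> I \<Longrightarrow> f (\<gamma> s) = c"
begin

lemma covD_X_along: "s \<in> I \<Longrightarrow> covD g \<gamma> X s = c *\<^sub>R T s"
  using covD_X f_along by simp

lemma k1_\<alpha>:
  assumes s: "s \<in> I"
  shows "k1 s * \<alpha> s + c = 0"
proof -
  have "g (\<gamma> s) (covD g \<gamma> T s) (X s) + g (\<gamma> s) (T s) (covD g \<gamma> X s) = 0"
    using metric_covD_has_real_derivative[OF velocity_smooth X_smooth s]
    by (rule has_real_derivative_zero_on_open[OF open_I s legendre, rotated])
  then show ?thesis
    using unit_T[OF s]
    by (simp add: frenet_T[OF s] covD_X_along[OF s] \<alpha>_def metric_simps[OF curve_in_U[OF s]])
qed

lemma \<alpha>_has_real_derivative: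
  assumes s: "s \<in> I"
  shows "(\<alpha> has_real_derivative k2 s * \<beta> s) (at s)"
proof -
  have p: "\<gamma> s \<in> U" using curve_in_U[OF s] .
  have "g (\<gamma> s) (N s) (T s) = 0"
    using T_N[OF s] metric_sym[OF p] by metis
  then show ?thesis
    using metric_covD_has_real_derivative[OF N_smooth X_smooth s] legendre[OF s]
    by (simp add: \<alpha>_def[abs_def] \<beta>_def frenet_N[OF s] covD_X_along[OF s] metric_simps[OF p])
qed

lemma \<beta>_has_real_derivative:
  assumes s: "s \<in> I"
  shows "(\<beta> has_real_derivative - k2 s * \<alpha> s) (at s)"
proof -
  have p: "\<gamma> s \<in> U" using curve_in_U[OF s] .
  have "g (\<gamma> s) (B s) (T s) = 0"
    using T_B[OF s] metric_sym[OF p] by metis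
  then show ?thesis
    using metric_covD_has_real_derivative[OF B_smooth X_smooth s]
    by (simp add: \<beta>_def[abs_def] \<alpha>_def frenet_B[OF s] covD_X_along[OF s] metric_simps[OF p])
qed

lemma covD_T_frame:
  assumes s: "s \<in> I"
  shows "covD g \<gamma> T s = \<kappa> 0 s *\<^sub>R E s - c *\<^sub>R X s"
proof -
  have "k1 s *\<^sub>R N s = (k1 s * ((\<alpha> s)^2 + (\<beta> s)^2)) *\<^sub>R N s"
    using X_frame_expansion(2)[OF s] by simp
  also have "\<dots> = (k1 s * \<beta> s) *\<^sub>R E s + (k1 s * \<alpha> s) *\<^sub>R (\<alpha> s *\<^sub>R N s + \<beta> s *\<^sub>R B s)"
    by (simp add: E_def algebra_simps power2_eq_square)
  finally show ?thesis
    using k1_\<alpha>[OF s] X_frame_expansion(1)[OF s]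
    by (simp add: frenet_T[OF s] \<kappa>_def eq_neg_iff_add_eq_0[symmetric] algebra_simps)
qed

lemma covD_E:
  assumes s: "s \<in> I"
  shows "covD g \<gamma> E s = - \<kappa> 0 s *\<^sub>R T s"
proof -
  have dN: "N differentiable (at s)" and dB: "B differentiable (at s)"
    using vf_smooth_differentiable N_smooth B_smooth s by blast+
  have "\<beta> differentiable (at s)" "(\<lambda>s. - \<alpha> s) differentiable (at s)"
    using \<beta>_has_real_derivative[OF s] DERIV_minus[OF \<alpha>_has_real_derivative[OF s]]
    unfolding real_differentiable_def by blast+
  note d\<beta> = differentiable_scaleR[OF this(1) dN] and d\<alpha> = differentiable_scaleR[OF this(2) dB]
  have "covD g \<gamma> E s = covD g \<gamma> (\<lambda>s. \<beta> s *\<^sub>R N s + (- \<alpha> s) *\<^sub>R B s) s"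
    by (simp add: E_def[abs_def])
  also have "\<dots> = covD g \<gamma> (\<lambda>s. \<beta> s *\<^sub>R N s) s + covD g \<gamma> (\<lambda>s. (- \<alpha> s) *\<^sub>R B s) s"
    by (rule covD_add[OF d\<beta> d\<alpha> s])
  also have "\<dots> = - \<kappa> 0 s *\<^sub>R T s"
    unfolding covD_scaleR[OF \<beta>_has_real_derivative[OF s] dN s]
      covD_scaleR[OF DERIV_minus[OF \<alpha>_has_real_derivative[OF s]] dB s]
    by (simp add: frenet_N[OF s] frenet_B[OF s] \<kappa>_def algebra_simps)
  finally show ?thesis .
qed

lemma \<kappa>1_\<alpha>:
  assumes s: "s \<in> I"
  shows "\<kappa> 1 s * \<alpha> s = - k1 s * k2 s"
proof -
  have dk1: "(k1 has_real_derivative deriv k1 s) (at s)"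
    by (rule C_inf_on_has_real_derivative[OF k1_smooth s])
  have "((\<lambda>s. k1 s * \<alpha> s + c) has_real_derivative deriv k1 s * \<alpha> s + k1 s * (k2 s * \<beta> s)) (at s)"
    by (auto intro!: derivative_eq_intros dk1 \<alpha>_has_real_derivative[OF s])
  then have "deriv k1 s * \<alpha> s + k1 s * (k2 s * \<beta> s) = 0"
    by (rule has_real_derivative_zero_on_open[OF open_I s, rotated]) (rule k1_\<alpha>)
  then have k1': "deriv k1 s * \<alpha> s = - k1 s * k2 s * \<beta> s"
    by simp
  have "(\<kappa> 0 has_real_derivative deriv k1 s * \<beta> s + k1 s * (- k2 s * \<alpha> s)) (at s)"
    unfolding \<kappa>_def by (auto intro!: derivative_eq_intros dk1 \<beta>_has_real_derivative[OF s])
  then have \<kappa>1: "\<kappa> 1 s = deriv k1 s * \<beta> s - k1 s * k2 s * \<alpha> s"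
    using DERIV_unique \<kappa>_has_real_derivative[OF s, of 0] by fastforce
  have "\<kappa> 1 s * \<alpha> s = (deriv k1 s * \<alpha> s) * \<beta> s - k1 s * k2 s * (\<alpha> s)^2"
    unfolding \<kappa>1 by (simp add: algebra_simps power2_eq_square)
  also have "\<dots> = - k1 s * k2 s * ((\<alpha> s)^2 + (\<beta> s)^2)"
    unfolding k1' by (simp add: algebra_simps power2_eq_square)
  finally show ?thesis
    using X_frame_expansion(2)[OF s] by simp
qed

lemma \<kappa>1_nonzero: "s \<in> I \<Longrightarrow> \<kappa> 1 s \<noteq> 0"
  using \<kappa>1_\<alpha> k1_pos k2_pos by force

lemma c_nonzero: "c \<noteq> 0"
  using \<kappa>1_\<alpha> k1_\<alpha> k1_pos k2_pos nonempty by force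

lemma covD_frame:
  assumes V: "\<And>t. t \<in> I \<Longrightarrow> V t = a t *\<^sub>R T t + b t *\<^sub>R E t + e t *\<^sub>R X t"
    and a: "(a has_real_derivative a') (at s)" and b: "(b has_real_derivative b') (at s)"
    and e: "(e has_real_derivative e') (at s)" and s: "s \<in> I"
    and coefficients: "ca = a' - \<kappa> 0 s * b s + c * e s" "cb = b' + \<kappa> 0 s * a s" "ce = e' - c * a s"
  shows "covD g \<gamma> V s = ca *\<^sub>R T s + cb *\<^sub>R E s + ce *\<^sub>R X s"
proof -
  have d: "T differentiable (at s)" "E differentiable (at s)" "X differentiable (at s)"
    using vf_smooth_differentiable[OF _ s] velocity_smooth E_smooth X_smooth by blast+
  have da: "a differentiable (at s)" "b differentiable (at s)" "e differentiable (at s)"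
    using a b e real_differentiable_def by blast+
  have "covD g \<gamma> V s = covD g \<gamma> (\<lambda>t. a t *\<^sub>R T t + b t *\<^sub>R E t + e t *\<^sub>R X t) s"
    using V s by (intro covD_cong) auto
  also have "\<dots> = covD g \<gamma> (\<lambda>t. a t *\<^sub>R T t) s
      + covD g \<gamma> (\<lambda>t. b t *\<^sub>R E t) s + covD g \<gamma> (\<lambda>t. e t *\<^sub>R X t) s"
    using d da s by (simp add: covD_add)
  also have "\<dots> = ca *\<^sub>R T s + cb *\<^sub>R E s + ce *\<^sub>R X s"
    using d s
    by (simp add: covD_scaleR[OF a] covD_scaleR[OF b] covD_scaleR[OF e] covD_T_frame covD_E covD_X_along
        coefficients algebra_simps)
  finally show ?thesis .
qed

lemma covD1_T: "s \<in> I \<Longrightarrow> covD g \<gamma> T s = 0 *\<^sub>R T s + \<kappa> 0 s *\<^sub>R E s + (- c) *\<^sub>R X s"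
  using covD_T_frame by simp

lemma covD2_T:
  assumes s: "s \<in> I"
  shows "(covD g \<gamma> ^^ 2) T s = (- (c^2) - (\<kappa> 0 s)^2) *\<^sub>R T s + \<kappa> 1 s *\<^sub>R E s + 0 *\<^sub>R X s"
proof -
  have "(covD g \<gamma> ^^ 2) T = covD g \<gamma> (covD g \<gamma> T)"
    by (simp add: numeral_2_eq_2)
  then show ?thesis
    by (simp only:) (rule covD_frame[OF covD1_T],
        auto intro!: derivative_eq_intros \<kappa>_has_real_derivative[OF s] s
        simp: algebra_simps power2_eq_square)
qed

lemma covD3_T:
  assumes s: "s \<in> I"
  shows "(covD g \<gamma> ^^ 3) T s = (- 3 * \<kappa> 0 s * \<kappa> 1 s) *\<^sub>R T s
    + (\<kappa> 2 s - \<kappa> 0 s * c^2 - (\<kappa> 0 s)^3) *\<^sub>R E s + (c^3 + (\<kappa> 0 s)^2 * c) *\<^sub>R X s"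
  unfolding funpow.simps(2)[of 2, simplified] o_apply
  by (rule covD_frame[OF covD2_T]) (auto intro!: derivative_eq_intros \<kappa>_has_real_derivative[OF s] s
      simp: algebra_simps eval_nat_numeral)

lemma covD4_T:
  assumes s: "s \<in> I"
  shows "(covD g \<gamma> ^^ 4) T s =
      (c^4 - 3 * (\<kappa> 1 s)^2 - 4 * \<kappa> 0 s * \<kappa> 2 s + 2 * (\<kappa> 0 s)^2 * c^2 + (\<kappa> 0 s)^4) *\<^sub>R T s
    + (\<kappa> 3 s - \<kappa> 1 s * c^2 - 6 * (\<kappa> 0 s)^2 * \<kappa> 1 s) *\<^sub>R E s
    + (5 * \<kappa> 0 s * \<kappa> 1 s * c) *\<^sub>R X s"
  unfolding funpow.simps(2)[of 3, simplified] o_apply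
  by (rule covD_frame[OF covD3_T]) (auto intro!: derivative_eq_intros \<kappa>_has_real_derivative[OF s] s
      simp: algebra_simps eval_nat_numeral)

lemma covD5_T:
  assumes s: "s \<in> I"
  shows "(covD g \<gamma> ^^ 5) T s =
      (- 10 * \<kappa> 1 s * \<kappa> 2 s - 5 * \<kappa> 0 s * \<kappa> 3 s + 10 * \<kappa> 0 s * \<kappa> 1 s * c^2
       + 10 * (\<kappa> 0 s)^3 * \<kappa> 1 s) *\<^sub>R T s
    + (\<kappa> 4 s - \<kappa> 2 s * c^2 + \<kappa> 0 s * c^4 - 15 * \<kappa> 0 s * (\<kappa> 1 s)^2 - 10 * (\<kappa> 0 s)^2 * \<kappa> 2 s
       + 2 * (\<kappa> 0 s)^3 * c^2 + (\<kappa> 0 s)^5) *\<^sub>R E s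
    + (- (c^5) + 8 * (\<kappa> 1 s)^2 * c + 9 * \<kappa> 0 s * \<kappa> 2 s * c - 2 * (\<kappa> 0 s)^2 * c^3
       - (\<kappa> 0 s)^4 * c) *\<^sub>R X s"
  unfolding funpow.simps(2)[of 4, simplified] o_apply
  by (rule covD_frame[OF covD4_T]) (auto intro!: derivative_eq_intros \<kappa>_has_real_derivative[OF s] s
      simp: algebra_simps eval_nat_numeral)

lemma tau3_T:
  assumes s: "s \<in> I"
  shows "g (\<gamma> s) (tau3 g \<gamma> s) (T s) = - 10 * \<kappa> 1 s * \<kappa> 2 s - 5 * \<kappa> 0 s * \<kappa> 3 s
    + 10 * \<kappa> 0 s * \<kappa> 1 s * c^2 + 10 * (\<kappa> 0 s)^3 * \<kappa> 1 s"
  using curve_in_U[OF s]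
  by (simp add: tau3_def Let_def metric_simps curvature_metric_self covD5_T[OF s] metric_frame_T[OF s])

context
  fixes h :: real
  assumes df_xi_along: "\<And>s. s \<in> I \<Longrightarrow> df_xi (\<gamma> s) = h"
begin

lemma tau3_X:
  assumes s: "s \<in> I"
  shows "g (\<gamma> s) (tau3 g \<gamma> s) (X s) = c * (8 * (\<kappa> 1 s)^2 + 9 * \<kappa> 0 s * \<kappa> 2 s
    - c^4 - 2 * (\<kappa> 0 s)^2 * c^2 - (\<kappa> 0 s)^4 - 2 * (h + c^2) * (c^2 + (\<kappa> 0 s)^2))"
proof -
  have p: "\<gamma> s \<in> U" using curve_in_U[OF s] .
  have sym: "g (\<gamma> s) (T s) v = g (\<gamma> s) v (T s)" for v
    by (rule metric_sym[OF p])
  have df: "frechet_derivative f (at (\<gamma> s)) v = h * \<eta> (\<gamma> s) v" for v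
    using frechet_derivative_f[OF p] df_xi_along[OF s] by simp
  have products:
    "g (\<gamma> s) (T s) (covD g \<gamma> T s) = 0" "g (\<gamma> s) (covD g \<gamma> T s) (X s) = - c"
    "g (\<gamma> s) (T s) ((covD g \<gamma> ^^ 2) T s) = - (c^2) - (\<kappa> 0 s)^2"
    "g (\<gamma> s) ((covD g \<gamma> ^^ 2) T s) (X s) = 0"
    "g (\<gamma> s) (T s) ((covD g \<gamma> ^^ 3) T s) = - 3 * \<kappa> 0 s * \<kappa> 1 s"
    "g (\<gamma> s) ((covD g \<gamma> ^^ 3) T s) (X s) = c^3 + (\<kappa> 0 s)^2 * c"
    "g (\<gamma> s) ((covD g \<gamma> ^^ 5) T s) (X s) = - (c^5) + 8 * (\<kappa> 1 s)^2 * c + 9 * \<kappa> 0 s * \<kappa> 2 s * c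
       - 2 * (\<kappa> 0 s)^2 * c^3 - (\<kappa> 0 s)^4 * c"
    unfolding sym covD1_T[OF s] covD2_T[OF s] covD3_T[OF s] covD5_T[OF s]
    by (simp_all only: metric_frame_T[OF s] metric_frame_X[OF s])
  show ?thesis
    unfolding tau3_def Let_def metric_simps[OF p] curvature_xi[OF p] df f_along[OF s] products
      legendre[OF s] unit_T[OF s]
    by (simp add: algebra_simps eval_nat_numeral)
qed

end

end

end

section \<open>The triharmonicity equations\<close>

lemma cubic_relation_forces_critical_point:
  fixes u u' :: "real \<Rightarrow> real"
  assumes I: "open I" and s: "s \<in> I" and b: "b \<noteq> 0"
    and u: "\<And>t. t \<in> I \<Longrightarrow> (u has_real_derivative u' t) (at t)"
    and cubic: "\<And>t. t \<in> I \<Longrightarrow> u t * (a + b * (u t)^2) = 0"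
  shows "\<exists>t\<in>I. u' t = 0"
proof (rule ccontr)
  assume "\<not> ?thesis"
  then have u': "\<And>t. t \<in> I \<Longrightarrow> u' t \<noteq> 0" by blast
  have "u t = 0" if t: "t \<in> I" for t
  proof -
    have "((\<lambda>t. u t * (a + b * (u t)^2)) has_real_derivative u' t * (a + 3 * b * (u t)^2)) (at t)"
      using u[OF t] by (auto intro!: derivative_eq_intros simp: algebra_simps power2_eq_square)
    then have "u' t * (a + 3 * b * (u t)^2) = 0"
      by (rule has_real_derivative_zero_on_open[OF I t cubic, rotated])
    then have a: "a = - 3 * b * (u t)^2"
      using u'[OF t] by simp
    have "- 2 * b * (u t)^3 = 0"
      using cubic[OF t] unfolding a by (simp add: algebra_simps eval_nat_numeral)
    then show ?thesis
      using b by simp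
  qed
  then have "u' s = 0"
    by (rule has_real_derivative_zero_on_open[OF I s _ u[OF s]])
  with u'[OF s] show False ..
qed

text \<open>The assumptions \<open>tangential\<close> and \<open>normal\<close> are the \<open>T\<close>- and \<open>\<xi>\<close>-components of
  \<open>\<tau>\<^sub>3 = 0\<close> along a Legendre curve, \<open>k n\<close> being the \<open>n\<close>-th derivative of its curvature
  function. Eliminating the higher derivatives leaves a cubic relation for \<open>k 0\<close>.\<close>
context
  fixes k :: "nat \<Rightarrow> real \<Rightarrow> real" and c m :: real and I :: "real set"
  assumes I: "open I"
    and deriv: "\<And>n s. s \<in> I \<Longrightarrow> (k n has_real_derivative k (Suc n) s) (at s)"
    and k1: "\<And>s. s \<in> I \<Longrightarrow> k 1 s \<noteq> 0"
    and tangential: "\<And>s. s \<in> I \<Longrightarrow>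
      - 10 * k 1 s * k 2 s - 5 * k 0 s * k 3 s + 10 * k 0 s * k 1 s * c^2 + 10 * (k 0 s)^3 * k 1 s = 0"
    and normal: "\<And>s. s \<in> I \<Longrightarrow>
      8 * (k 1 s)^2 + 9 * k 0 s * k 2 s - c^4 - 2 * (k 0 s)^2 * c^2 - (k 0 s)^4
        - 2 * m * (c^2 + (k 0 s)^2) = 0"
begin

lemma triharmonic_ode_derivatives:
  assumes "s \<in> I"
  shows "(k 0 has_real_derivative k 1 s) (at s)" "(k 1 has_real_derivative k 2 s) (at s)"
    "(k 2 has_real_derivative k 3 s) (at s)"
  using deriv[OF assms, of 0] deriv[OF assms, of 1] deriv[OF assms, of 2]
  by (simp_all add: numeral_eq_Suc)

lemma triharmonic_ode_second_derivative:
  assumes s: "s \<in> I"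
  shows "7 * k 2 s + 14 * k 0 s * c^2 + 14 * (k 0 s)^3 - 4 * m * k 0 s = 0"
proof -
  have "((\<lambda>s. 8 * (k 1 s)^2 + 9 * k 0 s * k 2 s - c^4 - 2 * (k 0 s)^2 * c^2 - (k 0 s)^4
          - 2 * m * (c^2 + (k 0 s)^2)) has_real_derivative
        25 * k 1 s * k 2 s + 9 * k 0 s * k 3 s - 4 * k 0 s * k 1 s * (c^2 + (k 0 s)^2 + m)) (at s)"
    using triharmonic_ode_derivatives[OF s]
    by (auto intro!: derivative_eq_intros simp: algebra_simps eval_nat_numeral)
  then have "25 * k 1 s * k 2 s + 9 * k 0 s * k 3 s - 4 * k 0 s * k 1 s * (c^2 + (k 0 s)^2 + m) = 0"
    by (rule has_real_derivative_zero_on_open[OF I s normal, rotated])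
  then have "5 * k 1 s * (7 * k 2 s + 14 * k 0 s * c^2 + 14 * (k 0 s)^3 - 4 * m * k 0 s) = 0"
    using tangential[OF s] by (simp add: algebra_simps eval_nat_numeral)
  then show ?thesis
    using k1[OF s] by simp
qed

lemma triharmonic_ode_first_integral:
  assumes s: "s \<in> I"
  shows "56 * (k 1 s)^2 - 7 * c^4 - 140 * (k 0 s)^2 * c^2 - 133 * (k 0 s)^4 - 14 * m * c^2
    + 22 * m * (k 0 s)^2 = 0"
proof -
  have "56 * (k 1 s)^2 - 7 * c^4 - 140 * (k 0 s)^2 * c^2 - 133 * (k 0 s)^4 - 14 * m * c^2
      + 22 * m * (k 0 s)^2
    = 7 * (8 * (k 1 s)^2 + 9 * k 0 s * k 2 s - c^4 - 2 * (k 0 s)^2 * c^2 - (k 0 s)^4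
        - 2 * m * (c^2 + (k 0 s)^2))
      - 9 * k 0 s * (7 * k 2 s + 14 * k 0 s * c^2 + 14 * (k 0 s)^3 - 4 * m * k 0 s)"
    by (simp add: algebra_simps eval_nat_numeral)
  then show ?thesis
    unfolding normal[OF s] triharmonic_ode_second_derivative[OF s] by simp
qed

lemma triharmonic_ode_cubic:
  assumes s: "s \<in> I"
  shows "k 0 s * ((14 * c^2 - 3 * m) + 21 * (k 0 s)^2) = 0"
proof -
  have "((\<lambda>s. 56 * (k 1 s)^2 - 7 * c^4 - 140 * (k 0 s)^2 * c^2 - 133 * (k 0 s)^4 - 14 * m * c^2
          + 22 * m * (k 0 s)^2) has_real_derivative
        112 * k 1 s * k 2 s - 280 * k 0 s * k 1 s * c^2 - 532 * (k 0 s)^3 * k 1 s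
          + 44 * m * k 0 s * k 1 s) (at s)"
    using triharmonic_ode_derivatives[OF s]
    by (auto intro!: derivative_eq_intros simp: algebra_simps eval_nat_numeral)
  then have d: "112 * k 1 s * k 2 s - 280 * k 0 s * k 1 s * c^2 - 532 * (k 0 s)^3 * k 1 s
      + 44 * m * k 0 s * k 1 s = 0"
    by (rule has_real_derivative_zero_on_open[OF I s triharmonic_ode_first_integral, rotated])
  have "36 * k 1 s * (k 0 s * ((14 * c^2 - 3 * m) + 21 * (k 0 s)^2))
    = 16 * k 1 s * (7 * k 2 s + 14 * k 0 s * c^2 + 14 * (k 0 s)^3 - 4 * m * k 0 s)
      - (112 * k 1 s * k 2 s - 280 * k 0 s * k 1 s * c^2 - 532 * (k 0 s)^3 * k 1 s
          + 44 * m * k 0 s * k 1 s)"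
    by (simp add: algebra_simps eval_nat_numeral)
  then have "36 * k 1 s * (k 0 s * ((14 * c^2 - 3 * m) + 21 * (k 0 s)^2)) = 0"
    unfolding triharmonic_ode_second_derivative[OF s] d by simp
  then show ?thesis
    using k1[OF s] by simp
qed

lemma triharmonic_ode_unsolvable: "I = {}"
proof (rule ccontr)
  assume "I \<noteq> {}"
  then obtain s0 where s0: "s0 \<in> I"
    by blast
  obtain t where "t \<in> I" "k 1 t = 0"
    using cubic_relation_forces_critical_point[OF I s0 _ _ triharmonic_ode_cubic]
      triharmonic_ode_derivatives(1) by force
  with k1 show False by blast
qed

end

context legendre_frenet_curve
begin

lemma not_triharmonic: "\<not> triharmonic g I \<gamma>"
proof
  assume tri: "triharmonic g I \<gamma>"
  obtain c where c: "\<And>s. s \<in> I \<Longrightarrow> f (\<gamma> s) = c"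
    using f_constant_along by blast
  obtain h where h: "\<And>s. s \<in> I \<Longrightarrow> df_xi (\<gamma> s) = h"
    using df_xi_constant_along by blast
  have tau: "tau3 g \<gamma> s = 0" if "s \<in> I" for s
    using tri that unfolding triharmonic_def by blast
  have "I = {}"
  proof (rule triharmonic_ode_unsolvable[OF open_I \<kappa>_has_real_derivative \<kappa>1_nonzero[OF c]])
    show "- 10 * \<kappa> 1 s * \<kappa> 2 s - 5 * \<kappa> 0 s * \<kappa> 3 s + 10 * \<kappa> 0 s * \<kappa> 1 s * c^2
        + 10 * (\<kappa> 0 s)^3 * \<kappa> 1 s = 0" if s: "s \<in> I" for s
      using tau3_T[OF c s] tau[OF s] metric_simps curve_in_U[OF s] by simp
    show "8 * (\<kappa> 1 s)^2 + 9 * \<kappa> 0 s * \<kappa> 2 s - c^4 - 2 * (\<kappa> 0 s)^2 * c^2 - (\<kappa> 0 s)^4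
        - 2 * (h + c^2) * (c^2 + (\<kappa> 0 s)^2) = 0" if s: "s \<in> I" for s
      using tau3_X[OF c h s] tau[OF s] metric_simps curve_in_U[OF s] c_nonzero[OF c] by simp
  qed
  with nonempty show False ..
qed

end

lemma f_kenmotsu_imp_field:
  assumes "f_kenmotsu U g \<phi> \<xi> \<eta> f"
  shows "f_kenmotsu_field U g \<xi> f" and "\<And>p X. p \<in> U \<Longrightarrow> \<eta> p X = g p X (\<xi> p)"
proof -
  show eta: "\<And>p X. p \<in> U \<Longrightarrow> \<eta> p X = g p X (\<xi> p)"
    using assms unfolding f_kenmotsu_def by blast
  show "f_kenmotsu_field U g \<xi> f"
    using assms unfolding f_kenmotsu_def
    by unfold_locales (auto simp: riemannian_def f_kenmotsu_field_axioms_def eta)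
qed

lemma legendre_frenet_curveI:
  assumes "f_kenmotsu U g \<phi> \<xi> \<eta> f" and "frenet_curve U g I \<gamma>" and "legendre_curve \<eta> I \<gamma>"
  shows "\<exists>N B k1 k2. legendre_frenet_curve U g I \<gamma> \<xi> f N B k1 k2"
proof -
  interpret f_kenmotsu_field U g \<xi> f
    using f_kenmotsu_imp_field(1)[OF assms(1)] .
  obtain N B k1 k2 where NB: "vf_smooth I N" "vf_smooth I B"
    and frame: "\<forall>s\<in>I. g (\<gamma> s) (N s) (N s) = 1 \<and> g (\<gamma> s) (B s) (B s) = 1 \<and>
                 g (\<gamma> s) (velocity \<gamma> s) (N s) = 0 \<and> g (\<gamma> s) (velocity \<gamma> s) (B s) = 0 \<and>
                 g (\<gamma> s) (N s) (B s) = 0 \<and> k1 s > 0 \<and> k2 s > 0 \<and>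
                 covD g \<gamma> (velocity \<gamma>) s = k1 s *\<^sub>R N s \<and>
                 covD g \<gamma> N s = - k1 s *\<^sub>R velocity \<gamma> s + k2 s *\<^sub>R B s \<and>
                 covD g \<gamma> B s = - k2 s *\<^sub>R N s"
    using assms(2) unfolding frenet_curve_def Let_def by metis
  have "legendre_frenet_curve U g I \<gamma> \<xi> f N B k1 k2"
    using assms NB frame f_kenmotsu_imp_field(2)[OF assms(1)]
    unfolding frenet_curve_def legendre_curve_def Let_def
    by unfold_locales (auto simp: riemannian_def)
  then show ?thesis by blast
qed

theorem theorem11:
  fixes U :: "pt set" and g :: "pt \<Rightarrow> pt \<Rightarrow> pt \<Rightarrow> real" and \<phi> :: "pt \<Rightarrow> pt \<Rightarrow> pt"
    and \<xi> :: "pt \<Rightarrow> pt" and \<eta> :: "pt \<Rightarrow> pt \<Rightarrow> real" and f :: "pt \<Rightarrow> real"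
    and I :: "real set" and \<gamma> :: "real \<Rightarrow> pt"
  assumes "f_kenmotsu U g \<phi> \<xi> \<eta> f"
    and "frenet_curve U g I \<gamma>"
    and "legendre_curve \<eta> I \<gamma>"
  shows "\<not> triharmonic g I \<gamma>"
  using legendre_frenet_curveI[OF assms] legendre_frenet_curve.not_triharmonic by blast

end
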